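(* Let $T=(V,E)$ be a finite tree with nonnegative vertex weights and positive edge lengths and total weight $\mathcal W$. Let $m\ge1$ and $k\ge1$ be integers. Then P1 has a placement $F$ of $m$ points of $T$ such that, for every set $S$ of $k$ points of $T$ with $S\cap F=\emptyset$, $$\mathcal Q_1(F,S)\ \ge\ \frac{m-k+1}{m+1}\,\mathcal W.$$
   Context: Model. $G=(V,E)$ is a finite connected graph with at least one edge. Each vertex $v$ has a weight $w(v)\ge 0$ and each edge $e$ has a length $w(e)>0$. $G$ is regarded as a metric space by identifying each edge $e=(u,v)$ with a segment of length $w(e)$ joining $u$ and $v$. A point of $G$ is a vertex or a point of an edge. $d(p,q)$ denotes the length of a shortest path in $G$ between points $p$ and $q$. For a finite nonempty set $A$ of points, $d(p,A)=\min_{a\in A}d(p,a)$. Player P1 places a set $F$ of $m\ge 1$ points of $G$. Afterwards Player P2 places a set $S$ of $k$ points of $G$ with $S\cap F=\emptyset$. A point $p$ is served by P2 if $d(p,S)\le d(p,F)$ (ties go to P2), and by P1 otherwise. The payoff of P2 is $$\mathcal Q_2(F,S)=\sum_{v\in V:\ d(v,S)\le d(v,F)} w(v)\;+\;\lambda\big(\{p \text{ in the interior of an edge}: d(p,S)\le d(p,F)\}\big),$$ where $\lambda$ is total length (one-dimensional Lebesgue measure along the edges). The total weight is $\mathcal W=\sum_{v\in V}w(v)+\sum_{e\in E}w(e)$, and the payoff of P1 is $\mathcal Q_1(F,S)=\mathcal W-\mathcal Q_2(F,S)$. Here $G$ is the tree $T$ (the One-Round $(m,k)$ Voronoi Game on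 $T$). *)

theory Defs
  imports "HOL-Analysis.Analysis"
begin

text \<open>A weighted graph is given by a vertex set V, a set E of edges, each undirected
edge stored exactly once as an ordered pair (u,v) (an arbitrary orientation),
vertex weights wv and edge lengths wl.\<close>

definition adj :: "('v \<times> 'v) set \<Rightarrow> 'v \<Rightarrow> 'v \<Rightarrow> bool" where
  "adj E u v \<longleftrightarrow> (u, v) \<in> E \<or> (v, u) \<in> E"

definition elen :: "('v \<times> 'v) set \<Rightarrow> ('v \<times> 'v \<Rightarrow> real) \<Rightarrow> 'v \<Rightarrow> 'v \<Rightarrow> real" where
  "elen E wl u v = (if (u, v) \<in> E then wl (u, v) else wl (v, u))"

definition is_walk :: "'v set \<Rightarrow> ('v \<times> 'v) set \<Rightarrow> 'v list \<Rightarrow> bool" where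
  "is_walk V E xs \<longleftrightarrow> xs \<noteq> [] \<and> set xs \<subseteq> V \<and>
     (\<forall>i. Suc i < length xs \<longrightarrow> adj E (xs ! i) (xs ! Suc i))"

definition walk_len :: "('v \<times> 'v) set \<Rightarrow> ('v \<times> 'v \<Rightarrow> real) \<Rightarrow> 'v list \<Rightarrow> real" where
  "walk_len E wl xs = (\<Sum>i<length xs - 1. elen E wl (xs ! i) (xs ! Suc i))"

definition connected_graph :: "'v set \<Rightarrow> ('v \<times> 'v) set \<Rightarrow> bool" where
  "connected_graph V E \<longleftrightarrow>
     (\<forall>u\<in>V. \<forall>v\<in>V. \<exists>xs. is_walk V E xs \<and> hd xs = u \<and> last xs = v)"

definition has_cycle :: "'v set \<Rightarrow> ('v \<times> 'v) set \<Rightarrow> bool" where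
  "has_cycle V E \<longleftrightarrow> (\<exists>xs. is_walk V E xs \<and> distinct xs \<and> length xs \<ge> 3 \<and>
      adj E (last xs) (hd xs))"

definition wgraph :: "'v set \<Rightarrow> ('v \<times> 'v) set \<Rightarrow> ('v \<Rightarrow> real) \<Rightarrow> ('v \<times> 'v \<Rightarrow> real) \<Rightarrow> bool" where
  "wgraph V E wv wl \<longleftrightarrow> finite V \<and> E \<subseteq> V \<times> V \<and> E \<noteq> {} \<and>
     (\<forall>(u, v)\<in>E. u \<noteq> v \<and> (v, u) \<notin> E) \<and>
     (\<forall>v\<in>V. wv v \<ge> 0) \<and> (\<forall>e\<in>E. wl e > 0)"

definition is_tree :: "'v set \<Rightarrow> ('v \<times> 'v) set \<Rightarrow> bool" where
  "is_tree V E \<longleftrightarrow> connected_graph V E \<and> \<not> has_cycle V E"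

definition vdist :: "'v set \<Rightarrow> ('v \<times> 'v) set \<Rightarrow> ('v \<times> 'v \<Rightarrow> real) \<Rightarrow> 'v \<Rightarrow> 'v \<Rightarrow> real" where
  "vdist V E wl u v = Inf {walk_len E wl xs | xs. is_walk V E xs \<and> hd xs = u \<and> last xs = v}"

text \<open>Points of the metric graph: a vertex, or an interior point of an edge (u,v)\<in>E
at distance t from u, with 0 < t < wl (u,v).\<close>
datatype 'v gpoint = Vx 'v | Ed "'v \<times> 'v" real

definition gpoints :: "'v set \<Rightarrow> ('v \<times> 'v) set \<Rightarrow> ('v \<times> 'v \<Rightarrow> real) \<Rightarrow> 'v gpoint set" where
  "gpoints V E wl = Vx ` V \<union> {Ed e t | e t. e \<in> E \<and> 0 < t \<and> t < wl e}"

fun exits :: "('v \<times> 'v \<Rightarrow> real) \<Rightarrow> 'v gpoint \<Rightarrow> ('v \<times> real) list" where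
  "exits wl (Vx v) = [(v, 0)]"
| "exits wl (Ed (u, v) t) = [(u, t), (v, wl (u, v) - t)]"

definition pdist :: "'v set \<Rightarrow> ('v \<times> 'v) set \<Rightarrow> ('v \<times> 'v \<Rightarrow> real) \<Rightarrow> 'v gpoint \<Rightarrow> 'v gpoint \<Rightarrow> real" where
  "pdist V E wl p q =
     Min ({a + vdist V E wl x y + b | x a y b. (x, a) \<in> set (exits wl p) \<and> (y, b) \<in> set (exits wl q)}
          \<union> (case (p, q) of (Ed e t, Ed e' s) \<Rightarrow> (if e = e' then {\<bar>t - s\<bar>} else {}) | _ \<Rightarrow> {}))"

definition setdist :: "'v set \<Rightarrow> ('v \<times> 'v) set \<Rightarrow> ('v \<times> 'v \<Rightarrow> real) \<Rightarrow> 'v gpoint \<Rightarrow> 'v gpoint set \<Rightarrow> real" where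
  "setdist V E wl p A = Min ((\<lambda>a. pdist V E wl p a) ` A)"

text \<open>Payoff of P2 (ties go to P2).\<close>
definition Q2 :: "'v set \<Rightarrow> ('v \<times> 'v) set \<Rightarrow> ('v \<Rightarrow> real) \<Rightarrow> ('v \<times> 'v \<Rightarrow> real)
    \<Rightarrow> 'v gpoint set \<Rightarrow> 'v gpoint set \<Rightarrow> real" where
  "Q2 V E wv wl F S =
     (\<Sum>v\<in>{v\<in>V. setdist V E wl (Vx v) S \<le> setdist V E wl (Vx v) F}. wv v)
   + (\<Sum>e\<in>E. measure lborel {t. 0 < t \<and> t < wl e \<and>
          setdist V E wl (Ed e t) S \<le> setdist V E wl (Ed e t) F})"

definition total_weight :: "'v set \<Rightarrow> ('v \<times> 'v) set \<Rightarrow> ('v \<Rightarrow> real) \<Rightarrow> ('v \<times> 'v \<Rightarrow> real) \<Rightarrow> real" where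
  "total_weight V E wv wl = (\<Sum>v\<in>V. wv v) + (\<Sum>e\<in>E. wl e)"

definition Q1 :: "'v set \<Rightarrow> ('v \<times> 'v) set \<Rightarrow> ('v \<Rightarrow> real) \<Rightarrow> ('v \<times> 'v \<Rightarrow> real)
    \<Rightarrow> 'v gpoint set \<Rightarrow> 'v gpoint set \<Rightarrow> real" where
  "Q1 V E wv wl F S = total_weight V E wv wl - Q2 V E wv wl F S"

end

theory Submission
  imports Defs
begin

text \<open>Let \<open>W\<close> be the total weight and \<open>c = W / (m + 1)\<close>. Peeling off one leaf \<open>l\<close> (with neighbour
  \<open>u\<close>) at a time, P1 places facilities on the pendant edge \<open>lu\<close> every \<open>c\<close> units of weight, starting
  from the leaf; the weight of the unguarded stretch next to \<open>u\<close> is added to the weight of \<open>u\<close> before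
  recursing into the rest of the tree. By induction, every point P2 may choose captures a region of
  weight at most \<open>c\<close>, while fewer than \<open>W / c = m + 1\<close> facilities are used. Adding further
  facilities up to \<open>m\<close> only shrinks the captured regions, and the points served by \<open>k\<close> competitors
  lie in the union of their captured regions, so \<open>Q2 \<le> k * c\<close>.\<close>

lemma is_walk_single[simp]: "is_walk V E [a] \<longleftrightarrow> a \<in> V"
  by (auto simp: is_walk_def)

lemma is_walk_Cons2: "is_walk V E (a # b # xs) \<longleftrightarrow> a \<in> V \<and> adj E a b \<and> is_walk V E (b # xs)"
proof -
  have "(\<forall>i. Suc i < length (a # b # xs) \<longrightarrow> adj E ((a # b # xs) ! i) ((a # b # xs) ! Suc i)) \<longleftrightarrow>
      adj E a b \<and> (\<forall>i. Suc i < length (b # xs) \<longrightarrow> adj E ((b # xs) ! i) ((b # xs) ! Suc i))"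
  proof safe
    fix i assume "\<forall>i. Suc i < length (b # xs) \<longrightarrow> adj E ((b # xs) ! i) ((b # xs) ! Suc i)" "adj E a b"
      "Suc i < length (a # b # xs)"
    then show "adj E ((a # b # xs) ! i) ((a # b # xs) ! Suc i)" by (cases i) auto
  qed (force, metis Suc_less_eq length_Cons nth_Cons_Suc)
  then show ?thesis by (auto simp: is_walk_def)
qed

lemma is_walk_hd: "is_walk V E (y # ys) \<Longrightarrow> y \<in> V" by (auto simp: is_walk_def)

lemma walk_len_single[simp]: "walk_len E wl [a] = 0"
  by (simp add: walk_len_def)

lemma walk_len_Cons2: "walk_len E wl (a # b # xs) = elen E wl a b + walk_len E wl (b # xs)"
  unfolding walk_len_def by (simp add: sum.lessThan_Suc_shift del: sum.lessThan_Suc)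

lemma walk_len_append: "walk_len E wl (xs @ [y]) + walk_len E wl (y # ys) = walk_len E wl (xs @ y # ys)"
proof (induction xs)
  case Nil then show ?case by simp
next
  case (Cons a xs)
  show ?case
  proof (cases xs)
    case Nil then show ?thesis by (simp add: walk_len_Cons2)
  next
    case (Cons b zs)
    then show ?thesis using Cons.IH by (simp add: walk_len_Cons2)
  qed
qed

lemma is_walk_append: "is_walk V E (xs @ y # ys) \<longleftrightarrow> is_walk V E (xs @ [y]) \<and> is_walk V E (y # ys)"
proof (induction xs)
  case Nil
  show ?case
  proof (cases ys)
    case Nil then show ?thesis by simp
  next
    case (Cons z zs) then show ?thesis by (auto simp: is_walk_Cons2)
  qed
next
  case (Cons a xs)
  show ?case
  proof (cases xs)
    case Nil
    then show ?thesis by (auto simp: is_walk_Cons2 dest: is_walk_hd)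
  next
    case (Cons b zs)
    then show ?thesis using Cons.IH by (auto simp: is_walk_Cons2)
  qed
qed

lemma adj_sym: "adj E a b \<longleftrightarrow> adj E b a" by (auto simp: adj_def)

lemma elen_sym: "adj E a b \<Longrightarrow> \<forall>(u,v)\<in>E. (v,u) \<notin> E \<Longrightarrow> elen E wl a b = elen E wl b a"
  by (auto simp: adj_def elen_def)

lemma elen_pos: "adj E a b \<Longrightarrow> \<forall>e\<in>E. wl e > 0 \<Longrightarrow> elen E wl a b > 0"
  by (auto simp: adj_def elen_def)

lemma walk_len_nonneg: "is_walk V E xs \<Longrightarrow> \<forall>e\<in>E. wl e > 0 \<Longrightarrow> walk_len E wl xs \<ge> 0"
proof (induction xs rule: induct_list012)
  case 1 then show ?case by (simp add: walk_len_def)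
next
  case (2 x) then show ?case by simp
next
  case (3 x y zs)
  then show ?case using elen_pos[of E x y wl] by (auto simp: is_walk_Cons2 walk_len_Cons2)
qed

lemma is_walk_rev: "is_walk V E (rev xs) \<longleftrightarrow> is_walk V E xs"
proof -
  have *: "is_walk V E xs \<Longrightarrow> is_walk V E (rev xs)" for xs
  proof (induction xs rule: induct_list012)
    case 1 then show ?case by simp
  next
    case (2 x) then show ?case by simp
  next
    case (3 x y zs)
    have "rev (x # y # zs) = rev zs @ y # [x]" by simp
    moreover have "is_walk V E (rev zs @ [y])" using 3 by (auto simp: is_walk_Cons2)
    moreover have "is_walk V E [y, x]" using 3 by (auto simp: is_walk_Cons2 adj_sym is_walk_def)
    ultimately show ?case using is_walk_append[of V E "rev zs" y "[x]"] by simp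
  qed
  show ?thesis using *[of xs] *[of "rev xs"] by auto
qed

lemma walk_len_rev: "is_walk V E xs \<Longrightarrow> \<forall>(u,v)\<in>E. (v,u) \<notin> E \<Longrightarrow> walk_len E wl (rev xs) = walk_len E wl xs"
proof (induction xs rule: induct_list012)
  case 1 then show ?case by simp
next
  case (2 x) then show ?case by simp
next
  case (3 x y zs)
  have "walk_len E wl (rev (x # y # zs)) = walk_len E wl (rev zs @ [y]) + walk_len E wl [y, x]"
    using walk_len_append[of E wl "rev zs" y "[x]"] by simp
  also have "walk_len E wl (rev zs @ [y]) = walk_len E wl (y # zs)" using 3 by (auto simp: is_walk_Cons2)
  also have "walk_len E wl [y, x] = elen E wl x y" using 3 elen_sym[of E x y wl]
    by (auto simp: walk_len_Cons2 is_walk_Cons2)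
  finally show ?case by (simp add: walk_len_Cons2)
qed

lemma is_walk_drop: "is_walk V E xs \<Longrightarrow> i < length xs \<Longrightarrow> is_walk V E (drop i xs)"
  unfolding is_walk_def
proof (intro conjI allI impI)
  assume h: "xs \<noteq> [] \<and> set xs \<subseteq> V \<and> (\<forall>i. Suc i < length xs \<longrightarrow> adj E (xs ! i) (xs ! Suc i))" "i < length xs"
  show "drop i xs \<noteq> []" using h by simp
  show "set (drop i xs) \<subseteq> V" using h set_drop_subset by fast
  fix j assume "Suc j < length (drop i xs)"
  then have "Suc (i + j) < length xs" by simp
  then have "adj E (xs ! (i + j)) (xs ! Suc (i + j))" using h by blast
  then show "adj E (drop i xs ! j) (drop i xs ! Suc j)" using h by (simp add: nth_drop)
qed

lemma sum_fun_upd_add: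
  fixes f :: "'a \<Rightarrow> 'b::comm_monoid_add"
  assumes "finite A"
  shows "(\<Sum>v\<in>A. (f(x := f x + y)) v) = (\<Sum>v\<in>A. f v) + (if x \<in> A then y else 0)"
proof -
  have "(\<Sum>v\<in>A. (f(x := f x + y)) v) = (\<Sum>v\<in>A. f v + (if v = x then y else 0))"
    by (intro sum.cong) auto
  then show ?thesis using assms by (simp add: sum.distrib)
qed

lemma sum_UN_le:
  fixes f :: "'a \<Rightarrow> real"
  assumes "finite I" "\<forall>i\<in>I. finite (A i)" "\<forall>x\<in>(\<Union>i\<in>I. A i). f x \<ge> 0"
  shows "sum f (\<Union>i\<in>I. A i) \<le> (\<Sum>i\<in>I. sum f (A i))"
  using assms
proof (induction I rule: finite_induct)
  case empty then show ?case by simp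
next
  case (insert i I)
  have fU: "finite (\<Union>j\<in>I. A j)" using insert by auto
  have fA: "finite (A i)" using insert by auto
  have "sum f (\<Union>j\<in>insert i I. A j) = sum f (A i \<union> (\<Union>j\<in>I. A j))" by simp
  also have "\<dots> = sum f (A i) + sum f (\<Union>j\<in>I. A j) - sum f (A i \<inter> (\<Union>j\<in>I. A j))"
    by (rule sum_Un[OF fA fU])
  also have "sum f (A i \<inter> (\<Union>j\<in>I. A j)) \<ge> 0" using insert.prems by (intro sum_nonneg) auto
  moreover have "sum f (\<Union>j\<in>I. A j) \<le> (\<Sum>j\<in>I. sum f (A j))" using insert by auto
  ultimately have "sum f (\<Union>j\<in>insert i I. A j) \<le> sum f (A i) + (\<Sum>j\<in>I. sum f (A j))" by linarith
  then show ?case using insert by simp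
qed

lemma measure_le_interval:
  assumes "S \<subseteq> {a..b}" "a \<le> b"
  shows "measure lborel S \<le> b - a"
proof (cases "S \<in> sets lborel")
  case True
  have "measure lborel S \<le> measure lborel {a..b}"
    using assms(1) True by (intro measure_mono_fmeasurable fmeasurable_compact) auto
  then show ?thesis using assms(2) by simp
qed (simp add: measure_notin_sets assms(2))

lemma pred_sets_lborel: "P \<in> measurable lborel (count_space UNIV) \<Longrightarrow> {t. P t} \<in> sets lborel"
proof -
  assume "P \<in> measurable lborel (count_space UNIV)"
  then have "{x\<in>space lborel. P x} \<in> sets lborel" by (rule predE)
  then show ?thesis by simp
qed

definition walk_lengths :: "'v set \<Rightarrow> ('v \<times> 'v) set \<Rightarrow> ('v \<times> 'v \<Rightarrow> real) \<Rightarrow> 'v \<Rightarrow> 'v \<Rightarrow> real set" where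
  "walk_lengths V E wl u v = {walk_len E wl xs | xs. is_walk V E xs \<and> hd xs = u \<and> last xs = v}"

lemma vdist_walks: "vdist V E wl u v = Inf (walk_lengths V E wl u v)"
  by (simp add: vdist_def walk_lengths_def)

locale conn_wgraph =
  fixes V :: "'v set" and E :: "('v \<times> 'v) set" and wl :: "'v \<times> 'v \<Rightarrow> real"
  assumes finV: "finite V" and subE: "E \<subseteq> V \<times> V"
    and E_simple: "\<forall>(u,v)\<in>E. u \<noteq> v \<and> (v,u) \<notin> E"
    and wl_pos: "\<forall>e\<in>E. wl e > 0"
    and conn: "connected_graph V E"
begin

lemma E_asym: "\<forall>(u,v)\<in>E. (v,u) \<notin> E" using E_simple by auto

lemma finite_E: "finite E" using finV subE by (meson finite_SigmaI finite_subset)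

lemma walk_lengths_bdd: "bdd_below (walk_lengths V E wl u v)"
  unfolding bdd_below_def
proof (intro exI ballI)
  fix r assume "r \<in> walk_lengths V E wl u v"
  then obtain xs where "is_walk V E xs" "r = walk_len E wl xs" unfolding walk_lengths_def by blast
  then show "0 \<le> r" using walk_len_nonneg wl_pos by blast
qed

lemma walk_lengths_nonempty: "u \<in> V \<Longrightarrow> v \<in> V \<Longrightarrow> walk_lengths V E wl u v \<noteq> {}"
  using conn unfolding connected_graph_def walk_lengths_def by blast

lemma vdist_le: "is_walk V E xs \<Longrightarrow> hd xs = u \<Longrightarrow> last xs = v \<Longrightarrow> vdist V E wl u v \<le> walk_len E wl xs"
  unfolding vdist_walks by (rule cInf_lower[OF _ walk_lengths_bdd]) (auto simp: walk_lengths_def)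

lemma vdist_ge: "u \<in> V \<Longrightarrow> v \<in> V \<Longrightarrow>
   (\<And>xs. is_walk V E xs \<Longrightarrow> hd xs = u \<Longrightarrow> last xs = v \<Longrightarrow> b \<le> walk_len E wl xs) \<Longrightarrow> b \<le> vdist V E wl u v"
  unfolding vdist_walks by (rule cInf_greatest[OF walk_lengths_nonempty]) (auto simp: walk_lengths_def)

lemma vdist_nonneg: "u \<in> V \<Longrightarrow> v \<in> V \<Longrightarrow> vdist V E wl u v \<ge> 0"
  by (rule vdist_ge) (use walk_len_nonneg wl_pos in blast)+

lemma vdist_refl: "u \<in> V \<Longrightarrow> vdist V E wl u u = 0"
  using vdist_le[of "[u]" u u] vdist_nonneg[of u u] by simp

lemma walk_lengths_sym: "walk_lengths V E wl u v = walk_lengths V E wl v u"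
proof -
  have "walk_lengths V E wl u v \<subseteq> walk_lengths V E wl v u" for u v
  proof
    fix r assume "r \<in> walk_lengths V E wl u v"
    then obtain xs where xs: "is_walk V E xs" "hd xs = u" "last xs = v" "r = walk_len E wl xs"
      unfolding walk_lengths_def by blast
    have "xs \<noteq> []" using xs(1) by (simp add: is_walk_def)
    have "is_walk V E (rev xs)" using xs(1) is_walk_rev by blast
    moreover have "hd (rev xs) = v" using xs(3) by (simp add: hd_rev)
    moreover have "last (rev xs) = u" using xs(2) by (simp add: last_rev)
    moreover have "walk_len E wl (rev xs) = r" using walk_len_rev[OF xs(1) E_asym] xs(4) by simp
    ultimately show "r \<in> walk_lengths V E wl v u" unfolding walk_lengths_def by (intro CollectI exI[of _ "rev xs"]) simp
  qed
  then show ?thesis by (intro equalityI) 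
qed

lemma vdist_sym: "vdist V E wl u v = vdist V E wl v u"
  unfolding vdist_walks by (rule arg_cong[where f=Inf, OF walk_lengths_sym])

lemma pdist_sym: "pdist V E wl p q = pdist V E wl q p"
proof -
  have swap: "{a + vdist V E wl x y + b | x a y b. (x, a) \<in> set (exits wl p) \<and> (y, b) \<in> set (exits wl q)}
     \<subseteq> {a + vdist V E wl x y + b | x a y b. (x, a) \<in> set (exits wl q) \<and> (y, b) \<in> set (exits wl p)}" for p q
  proof
    fix r assume "r \<in> {a + vdist V E wl x y + b | x a y b. (x, a) \<in> set (exits wl p) \<and> (y, b) \<in> set (exits wl q)}"
    then obtain x a y b where "r = a + vdist V E wl x y + b" "(x, a) \<in> set (exits wl p)" "(y, b) \<in> set (exits wl q)"
      by blast
    moreover have "a + vdist V E wl x y + b = b + vdist V E wl y x + a" using vdist_sym[of x y] by simp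
    ultimately show "r \<in> {a + vdist V E wl x y + b | x a y b. (x, a) \<in> set (exits wl q) \<and> (y, b) \<in> set (exits wl p)}"
      by blast
  qed
  have direct: "(case (p, q) of (Ed e t, Ed e' s) \<Rightarrow> (if e = e' then {\<bar>t - s\<bar>} else {}) | _ \<Rightarrow> {})
      = (case (q, p) of (Ed e t, Ed e' s) \<Rightarrow> (if e = e' then {\<bar>t - s\<bar>} else {}) | _ \<Rightarrow> {})"
    by (cases p; cases q) (auto simp: abs_minus_commute)
  show ?thesis unfolding pdist_def direct using swap[of p q] swap[of q p] by (simp add: subset_antisym)
qed

end

lemma exit_sums_finite: "finite {a + vdist V E wl x y + b | x a y b. (x,a) \<in> set A \<and> (y,b) \<in> set B}"
proof -
  have "{a + vdist V E wl x y + b | x a y b. (x,a) \<in> set A \<and> (y,b) \<in> set B}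
     \<subseteq> (\<lambda>((x,a),(y,b)). a + vdist V E wl x y + b) ` (set A \<times> set B)" by force
  then show ?thesis by (rule finite_subset) auto
qed

lemma pdist_candidates_finite: "finite ({a + vdist V E wl x y + b | x a y b. (x, a) \<in> set (exits wl p) \<and> (y, b) \<in> set (exits wl q)}
          \<union> (case (p, q) of (Ed e t, Ed e' s) \<Rightarrow> (if e = e' then {\<bar>t - s\<bar>} else {}) | _ \<Rightarrow> {}))"
  by (rule finite_UnI[OF exit_sums_finite]) (auto split: gpoint.splits)

lemma exits_ne: "set (exits wl p) \<noteq> {}"
  by (cases p) auto

lemma pdist_Vx: "pdist V E wl (Vx x) q = Min {vdist V E wl x y + b | y b. (y, b) \<in> set (exits wl q)}"
proof -
  have "{a + vdist V E wl x' y + b | x' a y b. (x', a) \<in> set (exits wl (Vx x)) \<and> (y, b) \<in> set (exits wl q)}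
     = {vdist V E wl x y + b | y b. (y, b) \<in> set (exits wl q)}" by auto
  then show ?thesis unfolding pdist_def by simp
qed

lemma vertex_exit_sums_finite: "finite {vdist V E wl x y + b | y b. (y, b) \<in> set (exits wl q)}"
proof -
  have "{vdist V E wl x y + b | y b. (y, b) \<in> set (exits wl q)} \<subseteq> (\<lambda>(y,b). vdist V E wl x y + b) ` set (exits wl q)" by force
  then show ?thesis by (rule finite_subset) auto
qed

lemma vertex_exit_sums_nonempty: "{vdist V E wl x y + b | y b. (y, b) \<in> set (exits wl q)} \<noteq> {}"
proof -
  obtain y b where yb: "(y, b) \<in> set (exits wl q)" using exits_ne[of wl q] by (metis all_not_in_conv surj_pair)
  have "vdist V E wl x y + b \<in> {vdist V E wl x y + b | y b. (y, b) \<in> set (exits wl q)}"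
    using yb by (intro CollectI exI[of _ y] exI[of _ b]) simp
  then show ?thesis by (metis empty_iff)
qed

lemma exit_sums_cong:
  fixes f g :: "'v \<Rightarrow> 'v \<Rightarrow> real"
  assumes "\<And>x a y b. (x, a) \<in> A \<Longrightarrow> (y, b) \<in> B \<Longrightarrow> f x y = g x y"
  shows "{a + f x y + b | x a y b. (x, a) \<in> A \<and> (y, b) \<in> B} = {a + g x y + b | x a y b. (x, a) \<in> A \<and> (y, b) \<in> B}"
  using assms by (intro Collect_cong) metis

context conn_wgraph
begin

lemma exits_nonneg: "p \<in> gpoints V E wl \<Longrightarrow> (x, a) \<in> set (exits wl p) \<Longrightarrow> x \<in> V \<and> a \<ge> 0"
  using subE by (auto simp: gpoints_def)

lemma pdist_nonneg: "p \<in> gpoints V E wl \<Longrightarrow> q \<in> gpoints V E wl \<Longrightarrow> pdist V E wl p q \<ge> 0"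
proof -
  assume pq: "p \<in> gpoints V E wl" "q \<in> gpoints V E wl"
  obtain x a where xa: "(x, a) \<in> set (exits wl p)" using exits_ne[of wl p] by (metis all_not_in_conv surj_pair)
  obtain y b where yb: "(y, b) \<in> set (exits wl q)" using exits_ne[of wl q] by (metis all_not_in_conv surj_pair)
  let ?S = "{a + vdist V E wl x y + b | x a y b. (x, a) \<in> set (exits wl p) \<and> (y, b) \<in> set (exits wl q)}"
  let ?D = "(case (p, q) of (Ed e t, Ed e' s) \<Rightarrow> (if e = e' then {\<bar>t - s\<bar>} else {}) | _ \<Rightarrow> {})"
  have ne: "?S \<union> ?D \<noteq> {}" using xa yb by blast
  have "\<forall>r\<in>?S \<union> ?D. 0 \<le> r"
  proof
    fix r assume "r \<in> ?S \<union> ?D"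
    then show "0 \<le> r"
    proof
      assume "r \<in> ?S"
      then obtain x a y b where "r = a + vdist V E wl x y + b" "(x, a) \<in> set (exits wl p)" "(y, b) \<in> set (exits wl q)" by blast
      then show ?thesis using exits_nonneg[OF pq(1)] exits_nonneg[OF pq(2)] vdist_nonneg by fastforce
    qed (auto split: gpoint.splits if_splits)
  qed
  then show ?thesis unfolding pdist_def using Min_ge_iff[OF pdist_candidates_finite ne] by blast
qed

lemma pdist_Vx_self: "x \<in> V \<Longrightarrow> pdist V E wl (Vx x) (Vx x) = 0"
  unfolding pdist_Vx using vdist_refl by simp

end

section \<open>Removing a pendant edge\<close>

locale pendant = conn_wgraph +
  fixes l u :: 'v and e0 :: "'v \<times> 'v"
  assumes lV: "l \<in> V" and uV: "u \<in> V" and lu: "l \<noteq> u" and e0E: "e0 \<in> E"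
    and e0: "e0 = (l, u) \<or> e0 = (u, l)"
    and leafadj: "\<And>z. adj E l z \<Longrightarrow> z = u"
begin

abbreviation "V' \<equiv> V - {l}"
abbreviation "E' \<equiv> E - {e0}"
abbreviation "w \<equiv> wl e0"

lemma E'_avoids_leaf: "(a, b) \<in> E' \<Longrightarrow> a \<noteq> l \<and> b \<noteq> l"
proof
  assume ab: "(a, b) \<in> E'"
  show "a \<noteq> l"
  proof
    assume "a = l"
    then have "adj E l b" using ab by (auto simp: adj_def)
    then have "b = u" by (rule leafadj)
    then show False using ab \<open>a = l\<close> e0 e0E E_simple by auto
  qed
  show "b \<noteq> l"
  proof
    assume "b = l"
    then have "adj E l a" using ab by (auto simp: adj_def)
    then have "a = u" by (rule leafadj)
    then show False using ab \<open>b = l\<close> e0 e0E E_simple by auto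
  qed
qed

lemma adj_minus_leafI: "adj E a b \<Longrightarrow> a \<noteq> l \<Longrightarrow> b \<noteq> l \<Longrightarrow> adj E' a b"
  using e0 by (auto simp: adj_def)

lemma adj_minus_leafD: "adj E' a b \<Longrightarrow> adj E a b" by (auto simp: adj_def)

lemma elen_minus_leaf: "a \<noteq> l \<Longrightarrow> b \<noteq> l \<Longrightarrow> elen E' wl a b = elen E wl a b"
  using e0 by (auto simp: elen_def)

lemma adj_lu: "adj E l u" "adj E u l" using e0 e0E by (auto simp: adj_def)

lemma elen_lu: "elen E wl l u = w" "elen E wl u l = w"
  using e0 e0E E_simple by (auto simp: elen_def)

lemma w_pos: "w > 0" using wl_pos e0E by blast

lemma walk_minus_leafD: "is_walk V' E' ys \<Longrightarrow> is_walk V E ys \<and> walk_len E' wl ys = walk_len E wl ys"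
proof (induction ys rule: induct_list012)
  case 1 then show ?case by (simp add: is_walk_def)
next
  case (2 x) then show ?case by simp
next
  case (3 x y zs)
  then have "x \<in> V'" "adj E' x y" "is_walk V' E' (y # zs)" by (auto simp: is_walk_Cons2)
  moreover have "y \<in> V'" using 3 by (auto simp: is_walk_Cons2 dest: is_walk_hd)
  ultimately show ?case using 3 adj_minus_leafD elen_minus_leaf[of x y] by (auto simp: is_walk_Cons2 walk_len_Cons2)
qed

lemma walk_minus_leafI: "is_walk V E xs \<Longrightarrow> l \<notin> set xs \<Longrightarrow> is_walk V' E' xs \<and> walk_len E' wl xs = walk_len E wl xs"
proof (induction xs rule: induct_list012)
  case 1 then show ?case by (simp add: is_walk_def)
next
  case (2 x) then show ?case by simp
next
  case (3 x y zs)
  then have "x \<in> V" "adj E x y" "is_walk V E (y # zs)" "x \<noteq> l" "y \<noteq> l" by (auto simp: is_walk_Cons2)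
  then show ?case using 3 adj_minus_leafI elen_minus_leaf[of x y] by (auto simp: is_walk_Cons2 walk_len_Cons2)
qed

lemma walk_shortcut_leaf:
  "is_walk V E xs \<Longrightarrow> hd xs \<noteq> l \<Longrightarrow> last xs \<noteq> l \<Longrightarrow>
    \<exists>ys. is_walk V' E' ys \<and> hd ys = hd xs \<and> last ys = last xs \<and> walk_len E' wl ys \<le> walk_len E wl xs"
proof (induction "length xs" arbitrary: xs rule: less_induct)
  case less
  show ?case
  proof (cases "l \<in> set xs")
    case False
    then show ?thesis using walk_minus_leafI[OF less.prems(1)] by auto
  next
    case True
    then obtain A B where xsAB: "xs = A @ l # B" by (meson split_list)
    have "A \<noteq> []" using less.prems(2) xsAB by auto
    have "B \<noteq> []" using less.prems(3) xsAB by auto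
    then obtain b B0 where B: "B = b # B0" by (cases B) auto
    obtain A0 a where A: "A = A0 @ [a]" using \<open>A \<noteq> []\<close> by (metis rev_exhaust)
    have w1: "is_walk V E (A0 @ [a])" "is_walk V E (a # l # b # B0)"
      using less.prems(1) is_walk_append[of V E A0 a "l # b # B0"] xsAB A B by auto
    then have "adj E a l" "is_walk V E (l # b # B0)" by (auto simp: is_walk_Cons2)
    then have "a = u" using leafadj adj_sym by metis
    have "adj E l b" "is_walk V E (b # B0)" using w1 by (auto simp: is_walk_Cons2)
    then have "b = u" using leafadj by metis
    define xs' where "xs' = A0 @ u # B0"
    have wx': "is_walk V E xs'" unfolding xs'_def
      using is_walk_append[of V E A0 u B0] w1 \<open>a = u\<close> \<open>is_walk V E (b # B0)\<close> \<open>b = u\<close> by simp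
    have "walk_len E wl xs = walk_len E wl (A0 @ [a]) + walk_len E wl (a # l # b # B0)"
      using walk_len_append[of E wl A0 a "l # b # B0"] xsAB A B by simp
    also have "walk_len E wl (a # l # b # B0) = 2 * w + walk_len E wl (u # B0)"
      using \<open>a = u\<close> \<open>b = u\<close> elen_lu by (simp add: walk_len_Cons2)
    finally have "walk_len E wl xs = 2 * w + walk_len E wl xs'"
      unfolding xs'_def using walk_len_append[of E wl A0 u B0] \<open>a = u\<close> by simp
    then have le: "walk_len E wl xs' \<le> walk_len E wl xs" using w_pos by simp
    have hd': "hd xs' = hd xs" unfolding xs'_def using xsAB A \<open>a = u\<close> by (cases A0) auto
    have last': "last xs' = last xs" unfolding xs'_def using xsAB B \<open>b = u\<close> by (cases B0) auto
    have "length xs' < length xs" unfolding xs'_def using xsAB A B by simp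
    then obtain ys where "is_walk V' E' ys \<and> hd ys = hd xs' \<and> last ys = last xs' \<and> walk_len E' wl ys \<le> walk_len E wl xs'"
      using less.hyps[of xs'] wx' hd' last' less.prems by auto
    then show ?thesis using hd' last' le by auto
  qed
qed

lemma conn_wgraph_minus_leaf: "conn_wgraph V' E' wl"
proof
  show "finite V'" using finV by simp
  show "E' \<subseteq> V' \<times> V'" using subE E'_avoids_leaf by auto
  show "\<forall>(a, b)\<in>E'. a \<noteq> b \<and> (b, a) \<notin> E'" using E_simple by auto
  show "\<forall>e\<in>E'. 0 < wl e" using wl_pos by auto
  show "connected_graph V' E'" unfolding connected_graph_def
  proof (intro ballI)
    fix x y assume xy: "x \<in> V'" "y \<in> V'"
    then obtain xs where "is_walk V E xs" "hd xs = x" "last xs = y" using conn unfolding connected_graph_def by blast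
    then show "\<exists>xs. is_walk V' E' xs \<and> hd xs = x \<and> last xs = y" using walk_shortcut_leaf xy by fastforce
  qed
qed

interpretation T': conn_wgraph V' E' wl by (rule conn_wgraph_minus_leaf)

lemma vdist_minus_leaf: "x \<in> V' \<Longrightarrow> y \<in> V' \<Longrightarrow> vdist V E wl x y = vdist V' E' wl x y"
proof (rule antisym)
  assume xy: "x \<in> V'" "y \<in> V'"
  show "vdist V E wl x y \<le> vdist V' E' wl x y"
  proof (rule T'.vdist_ge[OF xy])
    fix ys assume "is_walk V' E' ys" "hd ys = x" "last ys = y"
    then show "vdist V E wl x y \<le> walk_len E' wl ys" using walk_minus_leafD vdist_le by metis
  qed
  show "vdist V' E' wl x y \<le> vdist V E wl x y"
  proof (rule vdist_ge)
    show "x \<in> V" "y \<in> V" using xy by auto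
    fix xs assume "is_walk V E xs" "hd xs = x" "last xs = y"
    then obtain ys where "is_walk V' E' ys \<and> hd ys = x \<and> last ys = y \<and> walk_len E' wl ys \<le> walk_len E wl xs"
      using walk_shortcut_leaf xy by fastforce
    then show "vdist V' E' wl x y \<le> walk_len E wl xs" using T'.vdist_le by force
  qed
qed

lemma vdist_from_leaf: "y \<in> V' \<Longrightarrow> vdist V E wl l y = w + vdist V E wl u y"
proof (rule antisym)
  assume y: "y \<in> V'"
  show "vdist V E wl l y \<le> w + vdist V E wl u y"
  proof -
    have "w + walk_len E wl xs \<ge> vdist V E wl l y" if H: "is_walk V E xs" "hd xs = u" "last xs = y" for xs
    proof -
      obtain zs where xs: "xs = u # zs" using H by (cases xs) (auto simp: is_walk_def)
      have "is_walk V E (l # xs)" using H xs lV adj_lu by (simp add: is_walk_Cons2)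
      moreover have "walk_len E wl (l # xs) = w + walk_len E wl xs" using xs elen_lu by (simp add: walk_len_Cons2)
      ultimately show ?thesis using vdist_le[of "l # xs" l y] H xs by simp
    qed
    then have "vdist V E wl l y - w \<le> vdist V E wl u y"
      using vdist_ge[of u y "vdist V E wl l y - w"] uV y by force
    then show ?thesis by linarith
  qed
  show "w + vdist V E wl u y \<le> vdist V E wl l y"
  proof (rule vdist_ge)
    show "l \<in> V" "y \<in> V" using lV y by auto
    fix xs assume xs: "is_walk V E xs" "hd xs = l" "last xs = y"
    obtain zs where "xs = l # zs" using xs by (cases xs) (auto simp: is_walk_def)
    moreover have "zs \<noteq> []" using xs y \<open>xs = l # zs\<close> by auto
    ultimately obtain b ys where xs2: "xs = l # b # ys" by (cases zs) auto
    then have "adj E l b" "is_walk V E (b # ys)" using xs by (auto simp: is_walk_Cons2)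
    then have "b = u" using leafadj by blast
    have "walk_len E wl xs = w + walk_len E wl (u # ys)" using xs2 \<open>b = u\<close> elen_lu by (simp add: walk_len_Cons2)
    moreover have "vdist V E wl u y \<le> walk_len E wl (u # ys)"
      using vdist_le[of "u # ys" u y] \<open>is_walk V E (b # ys)\<close> \<open>b = u\<close> xs xs2 by simp
    ultimately show "w + vdist V E wl u y \<le> walk_len E wl xs" by simp
  qed
qed

lemma vdist_lu: "vdist V E wl l u = w" "vdist V E wl u l = w"
  using vdist_from_leaf[of u] vdist_refl[OF uV] uV lu vdist_sym by auto

text \<open>The pendant edge is parametrised by the distance \<open>\<pi>\<close> from the leaf; \<open>edge_coord\<close> converts
  it to the offset used by \<open>Ed\<close>, which is measured from the first component of the stored orientation.\<close>

definition edge_coord :: "real \<Rightarrow> real" where "edge_coord t = (if e0 = (l, u) then t else w - t)"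

definition ppt :: "real \<Rightarrow> 'v gpoint" where
  "ppt \<pi> = (if \<pi> = 0 then Vx l else Ed e0 (edge_coord \<pi>))"

lemma exits_ppt: "0 < \<pi> \<Longrightarrow> set (exits wl (ppt \<pi>)) = {(l, \<pi>), (u, w - \<pi>)}"
  using e0 lu by (auto simp: ppt_def edge_coord_def)

lemma exits_ppt_0: "set (exits wl (ppt 0)) = {(l, 0)}"
  by (simp add: ppt_def edge_coord_def)

lemma exits_pptE:
  assumes "(x, a) \<in> set (exits wl (ppt \<pi>))" "0 \<le> \<pi>"
  obtains "x = l" "a = \<pi>" | "x = u" "a = w - \<pi>" "0 < \<pi>"
  using assms exits_ppt exits_ppt_0 by (cases "\<pi> = 0") auto

lemma exits_ppt_leaf: "0 \<le> \<pi> \<Longrightarrow> (l, \<pi>) \<in> set (exits wl (ppt \<pi>))"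
  using exits_ppt exits_ppt_0 by (cases "\<pi> = 0") auto

lemma exits_minus_leaf: "p \<in> gpoints V' E' wl \<Longrightarrow> (x, a) \<in> set (exits wl p) \<Longrightarrow> x \<in> V'"
  using T'.subE by (auto simp: gpoints_def)

lemma pdist_minus_leaf: "p \<in> gpoints V' E' wl \<Longrightarrow> q \<in> gpoints V' E' wl \<Longrightarrow> pdist V E wl p q = pdist V' E' wl p q"
proof -
  assume pq: "p \<in> gpoints V' E' wl" "q \<in> gpoints V' E' wl"
  have "{a + vdist V E wl x y + b | x a y b. (x, a) \<in> set (exits wl p) \<and> (y, b) \<in> set (exits wl q)}
     = {a + vdist V' E' wl x y + b | x a y b. (x, a) \<in> set (exits wl p) \<and> (y, b) \<in> set (exits wl q)}"
    by (rule exit_sums_cong) (use vdist_minus_leaf exits_minus_leaf[OF pq(1)] exits_minus_leaf[OF pq(2)] in blast)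
  then show ?thesis unfolding pdist_def by simp
qed

lemma ppt_notin_gpoints_minus_leaf: "ppt \<pi> \<notin> gpoints V' E' wl"
  by (auto simp: ppt_def edge_coord_def gpoints_def)

lemma ppt_in_gpoints: "0 \<le> \<pi> \<Longrightarrow> \<pi> < w \<Longrightarrow> ppt \<pi> \<in> gpoints V E wl"
proof -
  assume h: "0 \<le> \<pi>" "\<pi> < w"
  show ?thesis
  proof (cases "\<pi> = 0")
    case True then show ?thesis using lV by (simp add: ppt_def edge_coord_def gpoints_def)
  next
    case False
    let ?t = "if e0 = (l, u) then \<pi> else w - \<pi>"
    have "0 < ?t" "?t < wl e0" using h False by auto
    then have "Ed e0 ?t \<in> gpoints V E wl" using e0E unfolding gpoints_def by blast
    then show ?thesis using False by (simp add: ppt_def edge_coord_def)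
  qed
qed

lemma gpoints_minus_leaf_subset: "gpoints V' E' wl \<subseteq> gpoints V E wl"
  by (auto simp: gpoints_def)

lemma gpoints_split: "gpoints V E wl = gpoints V' E' wl \<union> ppt ` {\<pi>. 0 \<le> \<pi> \<and> \<pi> < w}"
proof (intro equalityI subsetI)
  fix p assume p: "p \<in> gpoints V E wl"
  show "p \<in> gpoints V' E' wl \<union> ppt ` {\<pi>. 0 \<le> \<pi> \<and> \<pi> < w}"
  proof (cases p)
    case (Vx x)
    show ?thesis
    proof (cases "x = l")
      case True
      then have "p = ppt 0" using Vx by (simp add: ppt_def edge_coord_def)
      moreover have "(0::real) \<in> {\<pi>. 0 \<le> \<pi> \<and> \<pi> < w}" using w_pos by simp
      ultimately show ?thesis by blast
    next
      case False then show ?thesis using p Vx by (auto simp: gpoints_def)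
    qed
  next
    case (Ed e t)
    then have et: "e \<in> E" "0 < t" "t < wl e" using p by (auto simp: gpoints_def)
    show ?thesis
    proof (cases "e = e0")
      case False
      then have "e \<in> E'" using et by simp
      then have "Ed e t \<in> gpoints V' E' wl" using et unfolding gpoints_def by blast
      then show ?thesis using Ed by simp
    next
      case True
      define \<pi> where "\<pi> = (if e0 = (l, u) then t else w - t)"
      have "0 < \<pi>" "\<pi> < w" using et True by (auto simp: \<pi>_def)
      moreover have "ppt \<pi> = p" using Ed True \<open>0 < \<pi>\<close> by (auto simp: ppt_def edge_coord_def \<pi>_def)
      ultimately show ?thesis by force
    qed
  qed
next
  fix p assume "p \<in> gpoints V' E' wl \<union> ppt ` {\<pi>. 0 \<le> \<pi> \<and> \<pi> < w}"
  then show "p \<in> gpoints V E wl" using gpoints_minus_leaf_subset ppt_in_gpoints by auto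
qed

lemma ppt_inj: "0 \<le> \<pi> \<Longrightarrow> 0 \<le> \<pi>' \<Longrightarrow> ppt \<pi> = ppt \<pi>' \<Longrightarrow> \<pi> = \<pi>'"
  by (auto simp: ppt_def edge_coord_def split: if_splits)

lemma pdist_ppt_subtree:
  assumes \<pi>: "0 \<le> \<pi>" "\<pi> < w" and q: "q \<in> gpoints V' E' wl"
  shows "pdist V E wl (ppt \<pi>) q = (w - \<pi>) + pdist V' E' wl (Vx u) q"
proof -
  let ?M = "Min {vdist V' E' wl u y + b | y b. (y, b) \<in> set (exits wl q)}"
  have M: "pdist V' E' wl (Vx u) q = ?M" by (rule pdist_Vx)
  obtain y0 b0 where y0: "(y0, b0) \<in> set (exits wl q)" "?M = vdist V' E' wl u y0 + b0"
    using Min_in[OF vertex_exit_sums_finite vertex_exit_sums_nonempty, of V' E' wl u q] by auto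
  have Mle: "?M \<le> vdist V E wl u y + b" if "(y, b) \<in> set (exits wl q)" for y b
  proof -
    have "vdist V E wl u y = vdist V' E' wl u y" using vdist_minus_leaf uV lu exits_minus_leaf[OF q that] by auto
    then show ?thesis using that by (intro Min_le[OF vertex_exit_sums_finite]) auto
  qed
  have y0V: "y0 \<in> V'" using exits_minus_leaf[OF q y0(1)] .
  have dir: "(case (ppt \<pi>, q) of (Ed e t, Ed e' s) \<Rightarrow> (if e = e' then {\<bar>t - s\<bar>} else {}) | _ \<Rightarrow> {}) = {}"
    using q by (cases q) (auto simp: ppt_def edge_coord_def gpoints_def)
  let ?S = "{a + vdist V E wl x y + b | x a y b. (x, a) \<in> set (exits wl (ppt \<pi>)) \<and> (y, b) \<in> set (exits wl q)}"
  have "Min ?S = (w - \<pi>) + ?M"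
  proof (rule Min_eqI)
    show "finite ?S" by (rule exit_sums_finite)
    fix r assume "r \<in> ?S"
    then obtain x a y b where r: "r = a + vdist V E wl x y + b" "(x, a) \<in> set (exits wl (ppt \<pi>))" "(y, b) \<in> set (exits wl q)"
      by blast
    have yV: "y \<in> V'" using exits_minus_leaf[OF q r(3)] .
    from r(2) \<pi>(1) show "w - \<pi> + ?M \<le> r"
    proof (cases rule: exits_pptE)
      case 1 then show ?thesis using r(1) vdist_from_leaf[OF yV] Mle[OF r(3)] \<pi>(1) by simp
    next
      case 2 then show ?thesis using r(1) Mle[OF r(3)] by simp
    qed
  next
    show "w - \<pi> + ?M \<in> ?S"
    proof (cases "\<pi> = 0")
      case True
      have "vdist V E wl l y0 = w + vdist V' E' wl u y0" using vdist_from_leaf[OF y0V] vdist_minus_leaf[of u y0] uV lu y0V by simp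
      then have "w - \<pi> + ?M = 0 + vdist V E wl l y0 + b0" using y0 True by simp
      moreover have "(l, 0) \<in> set (exits wl (ppt \<pi>))" using True exits_ppt_0 by simp
      ultimately show ?thesis using y0(1) by blast
    next
      case False
      have "vdist V E wl u y0 = vdist V' E' wl u y0" using vdist_minus_leaf[of u y0] uV lu y0V by simp
      then have "w - \<pi> + ?M = (w - \<pi>) + vdist V E wl u y0 + b0" using y0 by simp
      moreover have "(u, w - \<pi>) \<in> set (exits wl (ppt \<pi>))" using False exits_ppt \<pi> by simp
      ultimately show ?thesis using y0(1) by blast
    qed
  qed
  then show ?thesis unfolding pdist_def dir M by simp
qed

lemma pdist_ppt_ppt:
  assumes \<pi>: "0 \<le> \<pi>" "\<pi> < w" and \<pi>': "0 \<le> \<pi>'" "\<pi>' < w"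
  shows "pdist V E wl (ppt \<pi>) (ppt \<pi>') = \<bar>\<pi> - \<pi>'\<bar>"
proof -
  let ?S = "{a + vdist V E wl x y + b | x a y b. (x, a) \<in> set (exits wl (ppt \<pi>)) \<and> (y, b) \<in> set (exits wl (ppt \<pi>'))}"
  let ?D = "(case (ppt \<pi>, ppt \<pi>') of (Ed e t, Ed e' s) \<Rightarrow> (if e = e' then {\<bar>t - s\<bar>} else {}) | _ \<Rightarrow> {})"
  have D: "?D = (if \<pi> = 0 \<or> \<pi>' = 0 then {} else {\<bar>\<pi> - \<pi>'\<bar>})"
    by (auto simp: ppt_def edge_coord_def abs_minus_commute)
  have "Min (?S \<union> ?D) = \<bar>\<pi> - \<pi>'\<bar>"
  proof (rule Min_eqI)
    show "finite (?S \<union> ?D)" using D by (intro finite_UnI[OF exit_sums_finite]) simp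
    fix r assume "r \<in> ?S \<union> ?D"
    then show "\<bar>\<pi> - \<pi>'\<bar> \<le> r"
    proof
      assume "r \<in> ?S"
      then obtain x a y b where r: "r = a + vdist V E wl x y + b" "(x, a) \<in> set (exits wl (ppt \<pi>))" "(y, b) \<in> set (exits wl (ppt \<pi>'))"
        by blast
      from r(2) \<pi>(1) show ?thesis
        by (cases rule: exits_pptE; use r(3) \<pi>'(1) in \<open>cases rule: exits_pptE\<close>)
          (use r(1) vdist_lu vdist_refl[OF lV] vdist_refl[OF uV] \<pi> \<pi>' in auto)
    next
      assume "r \<in> ?D" then show ?thesis using D by (auto split: if_splits)
    qed
  next
    show "\<bar>\<pi> - \<pi>'\<bar> \<in> ?S \<union> ?D"
    proof (cases "\<pi> = 0 \<or> \<pi>' = 0")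
      case False then show ?thesis using D by simp
    next
      case True
      have "(l, \<pi>) \<in> set (exits wl (ppt \<pi>))" "(l, \<pi>') \<in> set (exits wl (ppt \<pi>'))"
        using exits_ppt_leaf \<pi>(1) \<pi>'(1) by auto
      moreover have "\<bar>\<pi> - \<pi>'\<bar> = \<pi> + vdist V E wl l l + \<pi>'" using True vdist_refl[OF lV] \<pi> \<pi>' by auto
      ultimately show ?thesis by blast
    qed
  qed
  then show ?thesis unfolding pdist_def .
qed

end

section \<open>Existence of a pendant edge\<close>

lemma (in conn_wgraph) longest_path_exists:
  assumes "card V \<ge> 2"
  obtains xs where "is_walk V E xs" "distinct xs" "length xs \<ge> 2"
    "\<And>ys. is_walk V E ys \<Longrightarrow> distinct ys \<Longrightarrow> length ys \<le> length xs"
proof -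
  let ?P = "{xs. is_walk V E xs \<and> distinct xs}"
  have finP: "finite ?P"
    by (rule finite_subset[OF _ finite_subset_distinct[OF finV]]) (auto simp: is_walk_def)
  have "\<not> card V \<le> 1" using assms by simp
  then obtain v1 v2 where v12: "v1 \<in> V" "v2 \<in> V" "v1 \<noteq> v2"
    using card_le_Suc0_iff_eq[OF finV] by auto
  obtain zs where zs: "is_walk V E zs" "hd zs = v1" "last zs = v2" using conn v12 unfolding connected_graph_def by blast
  obtain a b zs' where "zs = a # b # zs'"
    using zs v12 by (cases zs; cases "tl zs") (auto simp: is_walk_def)
  then have ab: "a \<in> V" "adj E a b" "b \<in> V" using zs by (auto simp: is_walk_Cons2 dest: is_walk_hd)
  have "a \<noteq> b" using ab E_simple by (auto simp: adj_def)
  then have ab_path: "[a, b] \<in> ?P" using ab by (simp add: is_walk_Cons2)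
  then have "length ` ?P \<noteq> {}" by blast
  from Max_in[OF finite_imageI[OF finP] this] obtain xs
    where xs: "xs \<in> ?P" "length xs = Max (length ` ?P)" by auto
  have longest: "length ys \<le> length xs" if "is_walk V E ys" "distinct ys" for ys
  proof -
    have "length ys \<in> length ` ?P" using that by blast
    then show ?thesis using xs(2) Max_ge[OF finite_imageI[OF finP]] by metis
  qed
  moreover have "length xs \<ge> 2" using longest[of "[a, b]"] ab_path by simp
  ultimately show ?thesis using that xs(1) by blast
qed

text \<open>A longer path or a cycle would arise from any other neighbour of the end of a longest path.\<close>
lemma (in conn_wgraph) longest_path_end_leaf:
  assumes nc: "\<not> has_cycle V E" and xs: "is_walk V E xs" "distinct xs" "length xs \<ge> 2"
    and longest: "\<And>ys. is_walk V E ys \<Longrightarrow> distinct ys \<Longrightarrow> length ys \<le> length xs"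
    and z: "adj E (last xs) z"
  shows "z = xs ! (length xs - 2)"
proof (rule ccontr)
  define n where "n = length xs"
  assume zu: "z \<noteq> xs ! (length xs - 2)"
  have l_nth: "last xs = xs ! (n - 1)" unfolding n_def using xs(3) by (subst last_conv_nth) auto
  have zV: "z \<in> V" using z subE by (auto simp: adj_def)
  show False
  proof (cases "z \<in> set xs")
    case False
    obtain ys where ys: "xs = ys @ [last xs]" using xs(3) by (metis append_butlast_last_id list.size(3) not_numeral_le_zero)
    have "is_walk V E [last xs, z]" using z zV xs(1) ys by (auto simp: is_walk_Cons2 is_walk_def)
    then have "is_walk V E (ys @ last xs # [z])" using xs(1) ys is_walk_append[of V E ys "last xs" "[z]"] by simp
    then have "is_walk V E (xs @ [z])" by (subst ys) simp
    then show False using longest[of "xs @ [z]"] False xs(2) by simp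
  next
    case True
    then obtain i where i: "i < n" "xs ! i = z" unfolding n_def by (metis in_set_conv_nth)
    have "i \<noteq> n - 1" using i z E_simple unfolding adj_def l_nth by auto
    moreover have "i \<noteq> n - 2" using i zu unfolding n_def by auto
    ultimately have i3: "i + 3 \<le> n" using i by linarith
    let ?C = "drop i xs"
    have "is_walk V E ?C" using is_walk_drop[OF xs(1)] i unfolding n_def by blast
    moreover have "distinct ?C" "length ?C \<ge> 3" using xs(2) i3 unfolding n_def by simp_all
    moreover have "hd ?C = z" using i by (simp add: hd_drop_conv_nth n_def)
    moreover have "last ?C = last xs" using i unfolding n_def by simp
    ultimately have "has_cycle V E" unfolding has_cycle_def using z by (metis adj_sym)
    then show False using nc by simp
  qed
qed

lemma (in conn_wgraph) pendant_exists:
  assumes nc: "\<not> has_cycle V E" and V2: "card V \<ge> 2"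
  shows "\<exists>l u e0. pendant V E wl l u e0"
proof -
  obtain xs where xs: "is_walk V E xs" "distinct xs" "length xs \<ge> 2"
      and longest: "\<And>ys. is_walk V E ys \<Longrightarrow> distinct ys \<Longrightarrow> length ys \<le> length xs"
    using longest_path_exists[OF V2] by blast
  define l u where "l = last xs" and "u = xs ! (length xs - 2)"
  have "Suc (length xs - 2) < length xs" using xs(3) by simp
  then have "adj E u (xs ! Suc (length xs - 2))" using xs(1) unfolding is_walk_def u_def by blast
  moreover have "xs ! Suc (length xs - 2) = l"
  proof -
    have "Suc (length xs - 2) = length xs - 1" "xs \<noteq> []" using xs(3) by auto
    then show ?thesis unfolding l_def by (simp add: last_conv_nth)
  qed
  ultimately have adj: "adj E u l" by simp
  have lu: "l \<noteq> u" using adj E_simple by (auto simp: adj_def)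
  have "l \<in> V" "u \<in> V" using adj subE by (auto simp: adj_def)
  moreover obtain e0 where "e0 \<in> E" "e0 = (l, u) \<or> e0 = (u, l)" using adj unfolding adj_def by blast
  moreover have "\<And>z. adj E l z \<Longrightarrow> z = u"
    using longest_path_end_leaf[OF nc xs longest] unfolding l_def u_def by blast
  ultimately have "pendant V E wl l u e0"
    using lu by (intro pendant.intro conn_wgraph_axioms pendant_axioms.intro) auto
  then show ?thesis by blast
qed

lemma (in pendant) no_cycle_minus_leaf: "\<not> has_cycle V E \<Longrightarrow> \<not> has_cycle V' E'"
  unfolding has_cycle_def using walk_minus_leafD adj_minus_leafD by blast

section \<open>Captured regions\<close>

definition captured :: "'v set \<Rightarrow> ('v \<times> 'v) set \<Rightarrow> ('v \<times> 'v \<Rightarrow> real) \<Rightarrow> 'v gpoint set \<Rightarrow> 'v gpoint \<Rightarrow> 'v gpoint set" where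
  "captured V E wl F s = {p \<in> gpoints V E wl. \<forall>f\<in>F. pdist V E wl p s \<le> pdist V E wl p f}"

definition slice :: "('v \<times> 'v \<Rightarrow> real) \<Rightarrow> 'v \<times> 'v \<Rightarrow> 'v gpoint set \<Rightarrow> real set" where
  "slice wl e R = {t. 0 < t \<and> t < wl e \<and> Ed e t \<in> R}"

definition region_weight :: "'v set \<Rightarrow> ('v \<times> 'v) set \<Rightarrow> ('v \<Rightarrow> real) \<Rightarrow> ('v \<times> 'v \<Rightarrow> real) \<Rightarrow> 'v gpoint set \<Rightarrow> real" where
  "region_weight V E wv wl R = (\<Sum>v\<in>{v\<in>V. Vx v \<in> R}. wv v) + (\<Sum>e\<in>E. measure lborel (slice wl e R))"

text \<open>Regions are weighed through supersets with Lebesgue-measurable slices: \<open>measure\<close> is \<open>0\<close> on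
  non-measurable sets, so the weight of an arbitrary set of points would not be monotone.\<close>

definition coverable :: "'v set \<Rightarrow> ('v \<times> 'v) set \<Rightarrow> ('v \<Rightarrow> real) \<Rightarrow> ('v \<times> 'v \<Rightarrow> real) \<Rightarrow> real \<Rightarrow> 'v gpoint set \<Rightarrow> bool" where
  "coverable V E wv wl c C \<longleftrightarrow> (\<exists>R. R \<subseteq> gpoints V E wl \<and> C \<subseteq> R \<and>
      region_weight V E wv wl R \<le> c \<and> (\<forall>e\<in>E. slice wl e R \<in> sets lborel))"

definition bounded_cells :: "'v set \<Rightarrow> ('v \<times> 'v) set \<Rightarrow> ('v \<Rightarrow> real) \<Rightarrow> ('v \<times> 'v \<Rightarrow> real) \<Rightarrow> real \<Rightarrow> 'v gpoint set \<Rightarrow> bool" where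
  "bounded_cells V E wv wl c F \<longleftrightarrow> (\<forall>s \<in> gpoints V E wl - F. coverable V E wv wl c (captured V E wl F s))"

lemma coverableI:
  "R \<subseteq> gpoints V E wl \<Longrightarrow> C \<subseteq> R \<Longrightarrow> region_weight V E wv wl R \<le> c \<Longrightarrow>
    (\<forall>e\<in>E. slice wl e R \<in> sets lborel) \<Longrightarrow> coverable V E wv wl c C"
  unfolding coverable_def by blast

lemma coverableE:
  assumes "coverable V E wv wl c C"
  obtains R where "R \<subseteq> gpoints V E wl" "C \<subseteq> R" "region_weight V E wv wl R \<le> c"
    "\<forall>e\<in>E. slice wl e R \<in> sets lborel"
  using assms unfolding coverable_def by blast

lemma coverable_subset: "coverable V E wv wl c C \<Longrightarrow> C' \<subseteq> C \<Longrightarrow> coverable V E wv wl c C'"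
  unfolding coverable_def by blast

lemma bounded_cellsD:
  "bounded_cells V E wv wl c F \<Longrightarrow> s \<in> gpoints V E wl \<Longrightarrow> s \<notin> F \<Longrightarrow> coverable V E wv wl c (captured V E wl F s)"
  unfolding bounded_cells_def by blast

lemma region_weight_empty[simp]: "region_weight V E wv wl {} = 0"
  by (simp add: region_weight_def slice_def)

lemma captured_by_nearest:
  assumes p: "p \<in> gpoints V E wl" and S: "finite S" "S \<noteq> {}" and F: "finite F" "F \<noteq> {}"
    and le: "setdist V E wl p S \<le> setdist V E wl p F"
  shows "\<exists>s\<in>S. p \<in> captured V E wl F s"
proof -
  obtain s where s: "s \<in> S" "pdist V E wl p s = Min ((\<lambda>a. pdist V E wl p a) ` S)"
  proof -
    have "Min ((\<lambda>a. pdist V E wl p a) ` S) \<in> (\<lambda>a. pdist V E wl p a) ` S" using S by (intro Min_in) auto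
    then show ?thesis using that by (metis imageE)
  qed
  have "pdist V E wl p s \<le> pdist V E wl p f" if "f \<in> F" for f
  proof -
    have "Min ((\<lambda>a. pdist V E wl p a) ` F) \<le> pdist V E wl p f" using F that by simp
    then show ?thesis using le s unfolding setdist_def by simp
  qed
  then show ?thesis using s p unfolding captured_def by blast
qed

lemma bounded_cells_mono:
  assumes bounded: "bounded_cells V E wv wl c F0" and sub: "F0 \<subseteq> F"
  shows "bounded_cells V E wv wl c F"
  unfolding bounded_cells_def
proof
  fix s assume "s \<in> gpoints V E wl - F"
  then have "coverable V E wv wl c (captured V E wl F0 s)" using bounded sub by (auto intro: bounded_cellsD)
  moreover have "captured V E wl F s \<subseteq> captured V E wl F0 s" using sub by (auto simp: captured_def)
  ultimately show "coverable V E wv wl c (captured V E wl F s)" by (rule coverable_subset)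
qed

lemma Q2_eq_region_weight:
  "Q2 V E wv wl F S =
    region_weight V E wv wl {p \<in> gpoints V E wl. setdist V E wl p S \<le> setdist V E wl p F}"
proof -
  have "{t. 0 < t \<and> t < wl e \<and> setdist V E wl (Ed e t) S \<le> setdist V E wl (Ed e t) F} =
      slice wl e {p \<in> gpoints V E wl. setdist V E wl p S \<le> setdist V E wl p F}" if "e \<in> E" for e
    using that unfolding slice_def gpoints_def by blast
  moreover have "{v \<in> V. setdist V E wl (Vx v) S \<le> setdist V E wl (Vx v) F} =
      {v \<in> V. Vx v \<in> {p \<in> gpoints V E wl. setdist V E wl p S \<le> setdist V E wl p F}}"
    by (auto simp: gpoints_def)
  ultimately show ?thesis unfolding Q2_def region_weight_def by simp
qed

lemma region_weight_le_sum:
  assumes fin: "finite V" "finite E" "finite I" and wv: "\<forall>v\<in>V. wv v \<ge> 0"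
    and meas: "\<And>i e. i \<in> I \<Longrightarrow> e \<in> E \<Longrightarrow> slice wl e (R i) \<in> sets lborel"
    and cover: "X \<subseteq> (\<Union>i\<in>I. R i)"
  shows "region_weight V E wv wl X \<le> (\<Sum>i\<in>I. region_weight V E wv wl (R i))"
proof -
  have "{v\<in>V. Vx v \<in> X} \<subseteq> (\<Union>i\<in>I. {v\<in>V. Vx v \<in> R i})" using cover by blast
  then have "(\<Sum>v\<in>{v\<in>V. Vx v \<in> X}. wv v) \<le> (\<Sum>v\<in>(\<Union>i\<in>I. {v\<in>V. Vx v \<in> R i}). wv v)"
    using fin wv by (intro sum_mono2) auto
  also have "\<dots> \<le> (\<Sum>i\<in>I. \<Sum>v\<in>{v\<in>V. Vx v \<in> R i}. wv v)"
    using fin wv by (intro sum_UN_le) auto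
  finally have vertices: "(\<Sum>v\<in>{v\<in>V. Vx v \<in> X}. wv v) \<le> (\<Sum>i\<in>I. \<Sum>v\<in>{v\<in>V. Vx v \<in> R i}. wv v)" .
  have edge: "measure lborel (slice wl e X) \<le> (\<Sum>i\<in>I. measure lborel (slice wl e (R i)))" if e: "e \<in> E" for e
  proof -
    let ?U = "\<Union>i\<in>I. slice wl e (R i)"
    have "{0..wl e} \<in> fmeasurable lborel" using fmeasurable_cbox[of 0 "wl e"] by (simp add: cbox_interval)
    moreover have "?U \<subseteq> {0..wl e}" by (auto simp: slice_def)
    moreover have "?U \<in> sets lborel" using meas e fin(3) by (intro sets.finite_UN) auto
    ultimately have U: "?U \<in> fmeasurable lborel" by (rule fmeasurableI2)
    have sub: "slice wl e X \<subseteq> ?U" using cover unfolding slice_def by blast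
    have "measure lborel (slice wl e X) \<le> measure lborel ?U"
    proof (cases "slice wl e X \<in> sets lborel")
      case True
      show ?thesis by (rule measure_mono_fmeasurable[OF sub True U])
    qed (simp add: measure_notin_sets)
    also have "\<dots> \<le> (\<Sum>i\<in>I. measure lborel (slice wl e (R i)))"
      using meas e fin(3) by (intro measure_UNION_le) auto
    finally show ?thesis .
  qed
  have "(\<Sum>e\<in>E. measure lborel (slice wl e X)) \<le> (\<Sum>e\<in>E. \<Sum>i\<in>I. measure lborel (slice wl e (R i)))"
    using edge by (rule sum_mono)
  also have "\<dots> = (\<Sum>i\<in>I. \<Sum>e\<in>E. measure lborel (slice wl e (R i)))" by (rule sum.swap)
  finally show ?thesis using vertices unfolding region_weight_def sum.distrib by linarith
qed

lemma Q2_le: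
  assumes fin: "finite V" "finite E" and wv: "\<forall>v\<in>V. wv v \<ge> 0"
    and bounded: "bounded_cells V E wv wl c F" and F: "finite F" "F \<noteq> {}"
    and S: "S \<subseteq> gpoints V E wl" "finite S" "S \<noteq> {}" "S \<inter> F = {}"
  shows "Q2 V E wv wl F S \<le> real (card S) * c"
proof -
  have "\<forall>s\<in>S. coverable V E wv wl c (captured V E wl F s)"
    using bounded_cellsD[OF bounded] S by blast
  then obtain R where R: "\<And>s. s \<in> S \<Longrightarrow> captured V E wl F s \<subseteq> R s \<and> region_weight V E wv wl (R s) \<le> c
      \<and> (\<forall>e\<in>E. slice wl e (R s) \<in> sets lborel)"
    unfolding coverable_def by metis
  have "{p \<in> gpoints V E wl. setdist V E wl p S \<le> setdist V E wl p F} \<subseteq> (\<Union>s\<in>S. R s)"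
  proof
    fix p assume "p \<in> {p \<in> gpoints V E wl. setdist V E wl p S \<le> setdist V E wl p F}"
    then obtain s where "s \<in> S" "p \<in> captured V E wl F s" using captured_by_nearest[OF _ S(2,3) F] by blast
    then show "p \<in> (\<Union>s\<in>S. R s)" using R by blast
  qed
  then have "Q2 V E wv wl F S \<le> (\<Sum>s\<in>S. region_weight V E wv wl (R s))"
    unfolding Q2_eq_region_weight using fin S(2) wv R by (intro region_weight_le_sum) auto
  also have "\<dots> \<le> (\<Sum>s\<in>S. c)" using R by (intro sum_mono) auto
  finally show ?thesis by simp
qed

context pendant
begin

lemma region_weight_split: "region_weight V E wv wl R = region_weight V' E' wv wl R + (if Vx l \<in> R then wv l else 0) + measure lborel (slice wl e0 R)"
proof -
  have "{v \<in> V. Vx v \<in> R} = {v \<in> V'. Vx v \<in> R} \<union> (if Vx l \<in> R then {l} else {})" using lV by auto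
  then have A: "(\<Sum>v\<in>{v\<in>V. Vx v \<in> R}. wv v) = (\<Sum>v\<in>{v\<in>V'. Vx v \<in> R}. wv v) + (if Vx l \<in> R then wv l else 0)"
    using finV by (simp add: sum.union_disjoint)
  have "E = insert e0 E'" using e0E by auto
  then have B: "(\<Sum>e\<in>E. measure lborel (slice wl e R)) = measure lborel (slice wl e0 R) + (\<Sum>e\<in>E'. measure lborel (slice wl e R))"
    using finite_E by (metis Diff_iff finite_Diff insertI1 sum.insert)
  show ?thesis unfolding region_weight_def A B by simp
qed

lemma ppt_Vx_iff: "Vx l \<in> ppt ` A \<longleftrightarrow> 0 \<in> A"
  by (auto simp: ppt_def edge_coord_def image_iff split: if_splits)

lemma ppt_Vx_other: "x \<noteq> l \<Longrightarrow> Vx x \<notin> ppt ` A"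
  by (auto simp: ppt_def edge_coord_def)

lemma ppt_Ed_other: "e \<noteq> e0 \<Longrightarrow> Ed e t \<notin> ppt ` A"
  by (auto simp: ppt_def edge_coord_def)

lemma ppt_Ed_iff: "0 < t \<Longrightarrow> t < w \<Longrightarrow> Ed e0 t \<in> ppt ` A \<longleftrightarrow> edge_coord t \<in> A"
proof
  assume t: "0 < t" "t < w"
  { assume "Ed e0 t \<in> ppt ` A"
    then obtain \<pi> where "\<pi> \<in> A" "ppt \<pi> = Ed e0 t" by auto
    then show "edge_coord t \<in> A" by (auto simp: ppt_def edge_coord_def split: if_splits) }
  { assume h: "edge_coord t \<in> A"
    have "edge_coord t \<noteq> 0" using t by (auto simp: edge_coord_def)
    then have "ppt (edge_coord t) = Ed e0 t" by (simp add: ppt_def edge_coord_def)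
    then show "Ed e0 t \<in> ppt ` A" using h by (metis image_eqI) }
qed

definition pendant_weight :: "('v \<Rightarrow> real) \<Rightarrow> real set \<Rightarrow> real" where
  "pendant_weight wv A = (if 0 \<in> A then wv l else 0) + measure lborel {t. 0 < t \<and> t < w \<and> edge_coord t \<in> A}"

lemma slice_ppt: "B \<subseteq> gpoints V' E' wl \<Longrightarrow> slice wl e0 (B \<union> ppt ` A) = {t. 0 < t \<and> t < w \<and> edge_coord t \<in> A}"
proof -
  assume B: "B \<subseteq> gpoints V' E' wl"
  have "Ed e0 t \<notin> B" for t using B by (auto simp: gpoints_def)
  then show ?thesis unfolding slice_def using ppt_Ed_iff by auto
qed

lemma slice_ppt_other: "e \<in> E' \<Longrightarrow> slice wl e (B \<union> ppt ` A) = slice wl e B"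
  unfolding slice_def using ppt_Ed_other by auto

lemma region_weight_ppt: "B \<subseteq> gpoints V' E' wl \<Longrightarrow> region_weight V E wv wl (B \<union> ppt ` A) = region_weight V' E' wv wl B + pendant_weight wv A"
proof -
  assume B: "B \<subseteq> gpoints V' E' wl"
  have "Vx l \<notin> B" using B by (auto simp: gpoints_def)
  then have vl: "(Vx l \<in> B \<union> ppt ` A) \<longleftrightarrow> 0 \<in> A" using ppt_Vx_iff by auto
  have "{v \<in> V'. Vx v \<in> B \<union> ppt ` A} = {v \<in> V'. Vx v \<in> B}" using ppt_Vx_other by auto
  moreover have "(\<Sum>e\<in>E'. measure lborel (slice wl e (B \<union> ppt ` A))) = (\<Sum>e\<in>E'. measure lborel (slice wl e B))"
    using slice_ppt_other by simp
  ultimately have "region_weight V' E' wv wl (B \<union> ppt ` A) = region_weight V' E' wv wl B" by (simp add: region_weight_def)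
  then show ?thesis unfolding region_weight_split[of wv "B \<union> ppt ` A"] vl slice_ppt[OF B] pendant_weight_def by simp
qed

lemma region_weight_upd:
  "region_weight V' E' (wv(u := wv u + y)) wl B = region_weight V' E' wv wl B + (if Vx u \<in> B then y else 0)"
proof -
  have "finite {v \<in> V'. Vx v \<in> B}" using finV by simp
  note upd = sum_fun_upd_add[OF this, of wv u y]
  show ?thesis unfolding region_weight_def upd using uV lu by simp
qed

lemma coverable_ppt:
  assumes R': "R' \<subseteq> gpoints V' E' wl" "\<forall>e\<in>E'. slice wl e R' \<in> sets lborel"
    and A: "A \<subseteq> {\<pi>. 0 \<le> \<pi> \<and> \<pi> < w}" "{t. 0 < t \<and> t < w \<and> edge_coord t \<in> A} \<in> sets lborel"
    and C: "C \<subseteq> R' \<union> ppt ` A"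
    and weight: "region_weight V' E' wv wl R' + pendant_weight wv A \<le> c"
  shows "coverable V E wv wl c C"
proof (rule coverableI)
  show "R' \<union> ppt ` A \<subseteq> gpoints V E wl" using R'(1) A(1) gpoints_minus_leaf_subset ppt_in_gpoints by auto
  show "region_weight V E wv wl (R' \<union> ppt ` A) \<le> c" using region_weight_ppt[OF R'(1)] weight by simp
  show "\<forall>e\<in>E. slice wl e (R' \<union> ppt ` A) \<in> sets lborel"
    using slice_ppt[OF R'(1)] slice_ppt_other R'(2) A(2) by (metis Diff_iff singletonD)
qed (rule C)

end

section \<open>Facilities on a pendant edge\<close>

locale pendant_placement = pendant +
  fixes c :: real and wv :: "_ \<Rightarrow> real"
  assumes cpos: "c > 0" and wvnn: "\<forall>v\<in>V. wv v \<ge> 0"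
begin

text \<open>New facilities sit on the pendant edge at distances \<open>first_fac + j * c\<close> (\<open>j < nfacs\<close>) from the
  leaf, so that the leaf together with the stretch before the first facility weighs at most \<open>c\<close>, and a
  competitor on the edge captures at most the \<open>gap\<close> between two consecutive facilities. The stretch
  beyond the last facility (the \<open>tail\<close>) is not guarded here: its length is charged to \<open>u\<close> by adding
  \<open>tail_weight\<close> to the weight of \<open>u\<close> before recursing into the rest of the tree.\<close>

definition "first_fac = (if c \<le> wv l then 0 else c - wv l)"
definition "nfacs = nat \<lceil>(w - first_fac) / c\<rceil>"
definition "facs = (\<lambda>j. first_fac + real j * c) ` {..<nfacs}"
definition "last_fac = first_fac + real (nfacs - 1) * c"
definition "tail = {\<pi>. 0 \<le> \<pi> \<and> \<pi> < w \<and> (nfacs = 0 \<or> last_fac < \<pi>)}"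
definition "tail_weight = (if nfacs = 0 then wv l + w else w - last_fac)"
definition "cell x = \<lfloor>(x - first_fac) / c\<rfloor>"
definition "gap \<sigma> = {\<pi>. 0 \<le> \<pi> \<and> \<pi> < w \<and> cell \<pi> = cell \<sigma> \<and> (\<pi> = 0 \<longrightarrow> wv l < c)}"

lemma wv_leaf_nonneg: "wv l \<ge> 0" using wvnn lV by blast

lemma first_fac_bounds: "0 \<le> first_fac" "first_fac \<le> c" "wv l < c \<Longrightarrow> first_fac = c - wv l" "c \<le> wv l \<Longrightarrow> first_fac = 0"
  using wv_leaf_nonneg cpos by (auto simp: first_fac_def)

lemma nfacs_eq_0_iff: "nfacs = 0 \<longleftrightarrow> w \<le> first_fac"
proof -
  have "nfacs = 0 \<longleftrightarrow> \<lceil>(w - first_fac) / c\<rceil> \<le> 0" by (simp add: nfacs_def)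
  also have "\<dots> \<longleftrightarrow> (w - first_fac) / c \<le> 0" by (simp add: ceiling_le_zero)
  also have "\<dots> \<longleftrightarrow> w \<le> first_fac" using cpos by (simp add: divide_le_0_iff)
  finally show ?thesis .
qed

lemma last_fac_bounds:
  assumes "nfacs > 0" shows "last_fac < w" "w \<le> last_fac + c" "first_fac \<le> last_fac" "0 \<le> last_fac"
proof -
  let ?r = "(w - first_fac) / c"
  have nr: "real nfacs = of_int \<lceil>?r\<rceil>" using assms unfolding nfacs_def by simp
  have "of_int \<lceil>?r\<rceil> - 1 < ?r" by linarith
  then have "real nfacs - 1 < ?r" using nr by simp
  then have "(real nfacs - 1) * c < w - first_fac" using cpos by (simp add: pos_less_divide_eq)
  moreover have "real (nfacs - 1) = real nfacs - 1" using assms by simp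
  ultimately show "last_fac < w" unfolding last_fac_def by (simp add: algebra_simps)
  have "?r \<le> real nfacs" using nr by linarith
  then have "w - first_fac \<le> real nfacs * c" using cpos by (simp add: pos_divide_le_eq)
  then show "w \<le> last_fac + c" unfolding last_fac_def using \<open>real (nfacs - 1) = real nfacs - 1\<close> by (simp add: algebra_simps)
  show "first_fac \<le> last_fac" unfolding last_fac_def using cpos by simp
  then show "0 \<le> last_fac" using first_fac_bounds by linarith
qed

lemma less_nfacs: "first_fac + real j * c < w \<Longrightarrow> j < nfacs"
proof -
  assume h: "first_fac + real j * c < w"
  then have "real j < (w - first_fac) / c" using cpos by (simp add: pos_less_divide_eq algebra_simps)
  then have "real j < of_int \<lceil>(w - first_fac) / c\<rceil>" by linarith
  then have "int j < \<lceil>(w - first_fac) / c\<rceil>" by linarith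
  then show "j < nfacs" unfolding nfacs_def by linarith
qed

lemma facs_le_last: "x \<in> facs \<Longrightarrow> x \<le> last_fac"
  using cpos by (auto simp: facs_def last_fac_def)

lemma facs_range: "x \<in> facs \<Longrightarrow> 0 \<le> x \<and> x < w"
proof -
  assume x: "x \<in> facs"
  then have "nfacs > 0" by (auto simp: facs_def)
  have "x \<le> last_fac" using x facs_le_last by blast
  then show ?thesis using x last_fac_bounds[OF \<open>nfacs > 0\<close>] first_fac_bounds cpos by (auto simp: facs_def)
qed

lemma last_fac_in: "nfacs > 0 \<Longrightarrow> last_fac \<in> facs"
  unfolding facs_def last_fac_def by (rule image_eqI[of _ _ "nfacs - 1"]) auto

lemma facs_mem: "j < nfacs \<Longrightarrow> first_fac + real j * c \<in> facs"
  unfolding facs_def by auto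

lemma finite_facs: "finite facs" by (simp add: facs_def)

lemma card_facs: "card facs = nfacs"
proof -
  have "inj_on (\<lambda>j. first_fac + real j * c) {..<nfacs}" using cpos by (auto simp: inj_on_def)
  then show ?thesis unfolding facs_def by (simp add: card_image)
qed

lemma tail_weight_pos: "tail_weight > 0"
  using last_fac_bounds w_pos wv_leaf_nonneg by (auto simp: tail_weight_def)

lemma nfacs_weight_le: "wv l + w - tail_weight \<ge> real nfacs * c"
proof (cases "nfacs = 0")
  case True then show ?thesis by (simp add: tail_weight_def)
next
  case False
  then have "real (nfacs - 1) = real nfacs - 1" by simp
  then have "wv l + w - tail_weight = wv l + first_fac + (real nfacs - 1) * c" using False by (simp add: tail_weight_def last_fac_def)
  then show ?thesis using first_fac_bounds[of] wv_leaf_nonneg by (cases "c \<le> wv l") (auto simp: algebra_simps)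
qed

lemma cell_bounds: "first_fac + of_int (cell x) * c \<le> x" "x < first_fac + (of_int (cell x) + 1) * c"
proof -
  have "of_int (cell x) \<le> (x - first_fac) / c" "(x - first_fac) / c < of_int (cell x) + 1"
    unfolding cell_def by linarith+
  then show "first_fac + of_int (cell x) * c \<le> x" "x < first_fac + (of_int (cell x) + 1) * c"
    using cpos by (simp_all add: le_divide_eq divide_less_eq algebra_simps)
qed

lemma cell_eqI: "first_fac + of_int j * c \<le> x \<Longrightarrow> x < first_fac + (of_int j + 1) * c \<Longrightarrow> cell x = j"
  using cpos unfolding cell_def by (simp add: floor_eq_iff le_divide_eq divide_less_eq algebra_simps)

lemma cell_nonneg_ge: "0 \<le> x \<Longrightarrow> cell x \<ge> -1"
proof -
  assume "0 \<le> x"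
  then have "0 < (of_int (cell x) + 2) * c"
    using cell_bounds(2)[of x] first_fac_bounds(2) by (simp add: algebra_simps)
  then have "0 < of_int (cell x) + (2::real)" using cpos by (simp add: zero_less_mult_iff)
  then show ?thesis by linarith
qed

lemma cell_neg_if_zero_in_gap: "0 \<in> gap \<sigma> \<Longrightarrow> cell \<sigma> < 0"
proof -
  assume "0 \<in> gap \<sigma>"
  then have "cell \<sigma> = cell 0" "wv l < c" by (auto simp: gap_def)
  moreover have "cell 0 = -1" using first_fac_bounds wv_leaf_nonneg \<open>wv l < c\<close> by (intro cell_eqI) auto
  ultimately show ?thesis by simp
qed

lemma gap_subset_cell: "gap \<sigma> \<subseteq> {first_fac + of_int (cell \<sigma>) * c .. first_fac + (of_int (cell \<sigma>) + 1) * c}"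
proof
  fix \<pi> assume "\<pi> \<in> gap \<sigma>"
  then have "cell \<pi> = cell \<sigma>" by (simp add: gap_def)
  then show "\<pi> \<in> {first_fac + of_int (cell \<sigma>) * c .. first_fac + (of_int (cell \<sigma>) + 1) * c}"
    using cell_bounds[of \<pi>] by simp
qed

lemma fac_between:
  assumes "0 \<le> \<pi>" "\<sigma> < w" "cell \<pi> < cell \<sigma>"
  shows "\<exists>x\<in>facs. \<pi> < x \<and> x \<le> \<sigma>"
proof
  let ?x = "first_fac + of_int (cell \<sigma>) * c"
  have j: "0 \<le> cell \<sigma>" using cell_nonneg_ge[OF assms(1)] assms(3) by linarith
  have "?x \<le> \<sigma>" by (rule cell_bounds)
  then have "nat (cell \<sigma>) < nfacs" using j assms(2) by (intro less_nfacs) simp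
  then show "?x \<in> facs" using facs_mem[of "nat (cell \<sigma>)"] j by simp
  have "\<pi> < first_fac + (of_int (cell \<pi>) + 1) * c" by (rule cell_bounds)
  also have "\<dots> \<le> ?x" using assms(3) cpos by (intro add_left_mono mult_right_mono) auto
  finally show "\<pi> < ?x \<and> ?x \<le> \<sigma>" using \<open>?x \<le> \<sigma>\<close> by simp
qed

lemma measure_edge_coord_le: "A \<subseteq> {\<alpha>..\<beta>} \<Longrightarrow> \<alpha> \<le> \<beta> \<Longrightarrow> measure lborel {t. 0 < t \<and> t < w \<and> edge_coord t \<in> A} \<le> \<beta> - \<alpha>"
proof -
  assume A: "A \<subseteq> {\<alpha>..\<beta>}" and ab: "\<alpha> \<le> \<beta>"
  show ?thesis
  proof (cases "e0 = (l, u)")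
    case True
    have "edge_coord t = t" for t unfolding edge_coord_def using True by simp
    then have "{t. 0 < t \<and> t < w \<and> edge_coord t \<in> A} \<subseteq> {\<alpha>..\<beta>}" using A by auto
    then show ?thesis using measure_le_interval ab by blast
  next
    case False
    have "edge_coord t = w - t" for t unfolding edge_coord_def using False by simp
    then have "{t. 0 < t \<and> t < w \<and> edge_coord t \<in> A} \<subseteq> {w - \<beta>..w - \<alpha>}" using A by force
    then show ?thesis using measure_le_interval[of _ "w - \<beta>" "w - \<alpha>"] ab by simp
  qed
qed

lemma pendant_weight_le: "A \<subseteq> {\<alpha>..\<beta>} \<Longrightarrow> \<alpha> \<le> \<beta> \<Longrightarrow> 0 \<notin> A \<Longrightarrow> pendant_weight wv A \<le> \<beta> - \<alpha>"
  using measure_edge_coord_le by (simp add: pendant_weight_def)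

lemma pendant_weight_le_from_0: "A \<subseteq> {0..\<beta>} \<Longrightarrow> 0 \<le> \<beta> \<Longrightarrow> pendant_weight wv A \<le> wv l + \<beta>"
  using measure_edge_coord_le[of A 0 \<beta>] wv_leaf_nonneg by (simp add: pendant_weight_def)

lemma pendant_weight_tail: "pendant_weight wv tail \<le> tail_weight"
proof (cases "nfacs = 0")
  case True
  have "tail \<subseteq> {0..w}" by (auto simp: tail_def)
  then show ?thesis using pendant_weight_le_from_0[of tail w] True w_pos by (simp add: tail_weight_def)
next
  case False
  have "tail \<subseteq> {last_fac..w}" using False by (auto simp: tail_def)
  moreover have "0 \<notin> tail" using False last_fac_bounds by (auto simp: tail_def)
  ultimately show ?thesis using pendant_weight_le[of tail last_fac w] False last_fac_bounds by (simp add: tail_weight_def)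
qed

lemma pendant_weight_gap_tail: "\<sigma> \<in> tail \<Longrightarrow> pendant_weight wv (gap \<sigma>) \<le> tail_weight"
proof (cases "nfacs = 0")
  case True
  have "gap \<sigma> \<subseteq> {0..w}" by (auto simp: gap_def)
  then show ?thesis using pendant_weight_le_from_0[of "gap \<sigma>" w] True w_pos by (simp add: tail_weight_def)
next
  case False
  assume "\<sigma> \<in> tail"
  then have \<sigma>: "last_fac < \<sigma>" "\<sigma> < w" using False by (auto simp: tail_def)
  have "cell \<sigma> = int (nfacs - 1)"
    using \<sigma> last_fac_bounds[of] False by (intro cell_eqI) (auto simp: last_fac_def algebra_simps)
  then have sub: "gap \<sigma> \<subseteq> {last_fac..w}"
    using gap_subset_cell[of \<sigma>] by (auto simp: last_fac_def gap_def)
  have "0 \<notin> gap \<sigma>" using cell_neg_if_zero_in_gap \<open>cell \<sigma> = int (nfacs - 1)\<close> by fastforce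
  then show ?thesis using pendant_weight_le[OF sub] last_fac_bounds False by (simp add: tail_weight_def)
qed

lemma pendant_weight_gap: "pendant_weight wv (gap \<sigma>) \<le> c"
proof (cases "0 \<in> gap \<sigma>")
  case True
  then have "wv l < c" by (simp add: gap_def)
  then have "first_fac = c - wv l" by (simp add: first_fac_def)
  moreover have "(of_int (cell \<sigma>) + 1) * c \<le> 0"
    using cell_neg_if_zero_in_gap[OF True] cpos by (intro mult_nonpos_nonneg) auto
  then have "gap \<sigma> \<subseteq> {0..first_fac}" using gap_subset_cell[of \<sigma>] by (auto simp: gap_def)
  ultimately show ?thesis using pendant_weight_le_from_0[of "gap \<sigma>" first_fac] first_fac_bounds by simp
next
  case False
  then show ?thesis using pendant_weight_le[OF gap_subset_cell] cpos by (simp add: algebra_simps)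
qed

lemma sets_tail: "{t. 0 < t \<and> t < w \<and> edge_coord t \<in> tail} \<in> sets lborel"
  unfolding tail_def edge_coord_def by (rule pred_sets_lborel) measurable

lemma sets_gap: "{t. 0 < t \<and> t < w \<and> edge_coord t \<in> gap \<sigma>} \<in> sets lborel"
  unfolding gap_def cell_def edge_coord_def by (rule pred_sets_lborel) measurable

lemma total_weight_split:
  "total_weight V E wv wl = total_weight V' E' (wv(u := wv u + tail_weight)) wl + (wv l + w - tail_weight)"
proof -
  have "finite V'" using finV by simp
  note upd = sum_fun_upd_add[OF this, of wv u tail_weight]
  have "(\<Sum>v\<in>V. wv v) = wv l + (\<Sum>v\<in>V'. wv v)" using sum.remove[OF finV lV] by simp
  moreover have "(\<Sum>e\<in>E. wl e) = w + (\<Sum>e\<in>E'. wl e)" using sum.remove[OF finite_E e0E] by simp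
  ultimately show ?thesis unfolding total_weight_def upd using uV lu by simp
qed

lemma total_weight_minus_leaf_ge: "total_weight V' E' (wv(u := wv u + tail_weight)) wl \<ge> tail_weight"
proof -
  have uV': "u \<in> V'" using uV lu by simp
  have fV': "finite V'" using finV by simp
  have nn: "\<forall>v\<in>V'. (wv(u := wv u + tail_weight)) v \<ge> 0" using wvnn tail_weight_pos by auto
  have "(wv(u := wv u + tail_weight)) u \<le> (\<Sum>v\<in>V'. (wv(u := wv u + tail_weight)) v)"
    by (rule member_le_sum[OF uV' _ fV']) (use wvnn in auto)
  moreover have "(wv(u := wv u + tail_weight)) u \<ge> tail_weight" using wvnn uV by simp
  moreover have "(\<Sum>e\<in>E'. wl e) \<ge> 0" using wl_pos by (intro sum_nonneg) auto
  ultimately show ?thesis unfolding total_weight_def by linarith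
qed

lemma gpoints_cases:
  assumes "s \<in> gpoints V E wl"
  obtains "s \<in> gpoints V' E' wl" | \<sigma> where "0 \<le> \<sigma>" "\<sigma> < w" "s = ppt \<sigma>"
  using assms gpoints_split by auto

interpretation T': conn_wgraph V' E' wl by (rule conn_wgraph_minus_leaf)

lemma u_gpoints_minus_leaf: "Vx u \<in> gpoints V' E' wl" using uV lu by (simp add: gpoints_def)

context
  fixes F' :: "_ gpoint set"
  assumes F'sub: "F' \<subseteq> gpoints V' E' wl"
begin

definition "F_ext = F' \<union> ppt ` facs"

lemma F_ext_subset: "F_ext \<subseteq> gpoints V E wl"
  using F'sub gpoints_minus_leaf_subset ppt_in_gpoints facs_range by (auto simp: F_ext_def)

lemma captured_subtree_subtree:
  assumes s: "s \<in> gpoints V' E' wl" and p: "p \<in> gpoints V' E' wl" and pc: "p \<in> captured V E wl F_ext s"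
  shows "p \<in> captured V' E' wl F' s"
  unfolding captured_def
proof (intro CollectI conjI ballI)
  show "p \<in> gpoints V' E' wl" by (rule p)
  fix f assume f: "f \<in> F'"
  then have "pdist V E wl p s \<le> pdist V E wl p f" using pc by (auto simp: captured_def F_ext_def)
  then show "pdist V' E' wl p s \<le> pdist V' E' wl p f" using pdist_minus_leaf s p f F'sub by auto
qed

lemma captured_subtree_pendant:
  assumes s: "s \<in> gpoints V' E' wl" and \<pi>: "0 \<le> \<pi>" "\<pi> < w" and pc: "ppt \<pi> \<in> captured V E wl F_ext s"
  shows "Vx u \<in> captured V' E' wl F' s \<and> \<pi> \<in> tail"
proof
  have le: "pdist V E wl (ppt \<pi>) s \<le> pdist V E wl (ppt \<pi>) f" if "f \<in> F_ext" for f
    using pc that by (auto simp: captured_def)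
  have ds: "pdist V E wl (ppt \<pi>) s = (w - \<pi>) + pdist V' E' wl (Vx u) s" using pdist_ppt_subtree[OF \<pi> s] .
  show "Vx u \<in> captured V' E' wl F' s" unfolding captured_def
  proof (intro CollectI conjI ballI)
    show "Vx u \<in> gpoints V' E' wl" by (rule u_gpoints_minus_leaf)
    fix f assume f: "f \<in> F'"
    have "pdist V E wl (ppt \<pi>) f = (w - \<pi>) + pdist V' E' wl (Vx u) f" using pdist_ppt_subtree[OF \<pi>] f F'sub by auto
    then show "pdist V' E' wl (Vx u) s \<le> pdist V' E' wl (Vx u) f" using le[of f] f ds by (auto simp: F_ext_def)
  qed
  show "\<pi> \<in> tail"
  proof (cases "nfacs = 0")
    case True then show ?thesis using \<pi> by (simp add: tail_def)
  next
    case False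
    then have last_fac: "last_fac \<in> facs" using last_fac_in by simp
    then have "ppt last_fac \<in> F_ext" by (simp add: F_ext_def)
    then have "pdist V E wl (ppt \<pi>) s \<le> pdist V E wl (ppt \<pi>) (ppt last_fac)" by (rule le)
    also have "\<dots> = \<bar>\<pi> - last_fac\<bar>" using pdist_ppt_ppt[OF \<pi>] facs_range[OF last_fac] by simp
    finally have "(w - \<pi>) + pdist V' E' wl (Vx u) s \<le> \<bar>\<pi> - last_fac\<bar>" using ds by simp
    moreover have "pdist V' E' wl (Vx u) s \<ge> 0" using T'.pdist_nonneg[OF u_gpoints_minus_leaf s] .
    ultimately have "last_fac < \<pi>" using facs_range[OF last_fac] by (cases "\<pi> \<le> last_fac") auto
    then show ?thesis using \<pi> by (simp add: tail_def)
  qed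
qed

lemma captured_pendant_subtree:
  assumes \<sigma>: "0 \<le> \<sigma>" "\<sigma> < w" "\<sigma> \<notin> facs" and q: "q \<in> gpoints V' E' wl" and qc: "q \<in> captured V E wl F_ext (ppt \<sigma>)"
  shows "Vx u \<notin> F' \<and> \<sigma> \<in> tail \<and> q \<in> captured V' E' wl F' (Vx u)"
proof -
  have le: "pdist V E wl q (ppt \<sigma>) \<le> pdist V E wl q f" if "f \<in> F_ext" for f
    using qc that by (auto simp: captured_def)
  have ds: "pdist V E wl q (ppt \<sigma>) = (w - \<sigma>) + pdist V' E' wl q (Vx u)"
    using pdist_sym pdist_ppt_subtree[OF \<sigma>(1,2) q] T'.pdist_sym by simp
  have dnn: "pdist V' E' wl q (Vx u) \<ge> 0" using T'.pdist_nonneg[OF q u_gpoints_minus_leaf] .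
  have ws: "w - \<sigma> > 0" using \<sigma> by simp
  have A: "Vx u \<notin> F'"
  proof
    assume "Vx u \<in> F'"
    then have "pdist V E wl q (ppt \<sigma>) \<le> pdist V E wl q (Vx u)" using le by (simp add: F_ext_def)
    also have "\<dots> = pdist V' E' wl q (Vx u)" using pdist_minus_leaf[OF q u_gpoints_minus_leaf] .
    finally show False using ds ws by simp
  qed
  have B: "\<sigma> \<in> tail"
  proof (cases "nfacs = 0")
    case True then show ?thesis using \<sigma> by (simp add: tail_def)
  next
    case False
    then have last_fac: "last_fac \<in> facs" using last_fac_in by simp
    then have "ppt last_fac \<in> F_ext" by (simp add: F_ext_def)
    then have "pdist V E wl q (ppt \<sigma>) \<le> pdist V E wl q (ppt last_fac)" by (rule le)
    also have "\<dots> = (w - last_fac) + pdist V' E' wl q (Vx u)"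
      using pdist_sym pdist_ppt_subtree[OF _ _ q, of last_fac] facs_range[OF last_fac] T'.pdist_sym by simp
    finally have "\<sigma> \<ge> last_fac" using ds by simp
    moreover have "\<sigma> \<noteq> last_fac" using last_fac \<sigma>(3) by auto
    ultimately show ?thesis using \<sigma> by (simp add: tail_def)
  qed
  have C: "q \<in> captured V' E' wl F' (Vx u)" unfolding captured_def
  proof (intro CollectI conjI ballI)
    show "q \<in> gpoints V' E' wl" by (rule q)
    fix f assume f: "f \<in> F'"
    then have "pdist V E wl q (ppt \<sigma>) \<le> pdist V E wl q f" using le by (simp add: F_ext_def)
    also have "\<dots> = pdist V' E' wl q f" using pdist_minus_leaf[OF q] f F'sub by auto
    finally show "pdist V' E' wl q (Vx u) \<le> pdist V' E' wl q f" using ds ws by simp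
  qed
  show ?thesis using A B C by blast
qed

lemma captured_pendant_pendant:
  assumes \<sigma>: "0 \<le> \<sigma>" "\<sigma> < w" "\<sigma> \<notin> facs" and \<pi>: "0 \<le> \<pi>" "\<pi> < w"
    and pc: "ppt \<pi> \<in> captured V E wl F_ext (ppt \<sigma>)"
  shows "\<pi> \<in> gap \<sigma>"
proof -
  have closer: "\<bar>\<pi> - \<sigma>\<bar> \<le> \<bar>\<pi> - x\<bar>" if "x \<in> facs" for x
  proof -
    have "ppt x \<in> F_ext" using that by (simp add: F_ext_def)
    then have "pdist V E wl (ppt \<pi>) (ppt \<sigma>) \<le> pdist V E wl (ppt \<pi>) (ppt x)" using pc by (auto simp: captured_def)
    then show ?thesis using pdist_ppt_ppt[OF \<pi>] pdist_ppt_ppt[OF \<pi> \<sigma>(1,2)] facs_range[OF that] by simp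
  qed
  have \<pi>_facs: "\<pi> \<notin> facs" using closer[of \<pi>] \<sigma>(3) by force
  have "cell \<pi> = cell \<sigma>"
  proof (rule ccontr)
    assume "cell \<pi> \<noteq> cell \<sigma>"
    then consider "cell \<pi> < cell \<sigma>" | "cell \<sigma> < cell \<pi>" by linarith
    then show False
    proof cases
      case 1
      then obtain x where "x \<in> facs" "\<pi> < x" "x < \<sigma>" using fac_between[OF \<pi>(1) \<sigma>(2)] \<sigma>(3) by force
      then show False using closer by force
    next
      case 2
      then obtain x where "x \<in> facs" "\<sigma> < x" "x < \<pi>" using fac_between[OF \<sigma>(1) \<pi>(2)] \<pi>_facs by force
      then show False using closer by force
    qed
  qed
  moreover have "wv l < c" if "\<pi> = 0"
  proof (rule ccontr)
    assume "\<not> wv l < c"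
    then have "first_fac = 0" "0 < nfacs" using first_fac_bounds nfacs_eq_0_iff w_pos by auto
    then show False using facs_mem[of 0] \<pi>_facs that by simp
  qed
  ultimately show ?thesis using \<pi> by (simp add: gap_def)
qed

lemma finite_F_ext: "finite F' \<Longrightarrow> finite F_ext" using finite_facs by (simp add: F_ext_def)

lemma card_F_ext: "finite F' \<Longrightarrow> card F_ext = card F' + nfacs"
proof -
  assume fin: "finite F'"
  have disj: "F' \<inter> ppt ` facs = {}" using F'sub ppt_notin_gpoints_minus_leaf by auto
  have "inj_on ppt facs" using ppt_inj facs_range by (auto simp: inj_on_def)
  then have "card (ppt ` facs) = nfacs" using card_facs by (simp add: card_image)
  then show ?thesis unfolding F_ext_def using card_Un_disjoint[OF fin finite_imageI[OF finite_facs] disj] by simp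
qed

lemma captured_self_minus_leaf: "Vx u \<in> captured V' E' wl F' (Vx u)"
  unfolding captured_def
proof (intro CollectI conjI ballI)
  show "Vx u \<in> gpoints V' E' wl" by (rule u_gpoints_minus_leaf)
  fix f assume "f \<in> F'"
  then show "pdist V' E' wl (Vx u) (Vx u) \<le> pdist V' E' wl (Vx u) f"
    using T'.pdist_Vx_self[of u] uV lu T'.pdist_nonneg[OF u_gpoints_minus_leaf] F'sub by auto
qed

context
  assumes bounded': "bounded_cells V' E' (wv(u := wv u + tail_weight)) wl c F'"
begin

lemma coverable_captured_subtree:
  assumes s: "s \<in> gpoints V' E' wl" "s \<notin> F'"
  shows "coverable V E wv wl c (captured V E wl F_ext s)"
proof -
  obtain R' where R': "R' \<subseteq> gpoints V' E' wl" "captured V' E' wl F' s \<subseteq> R'"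
      "region_weight V' E' (wv(u := wv u + tail_weight)) wl R' \<le> c" "\<forall>e\<in>E'. slice wl e R' \<in> sets lborel"
    using bounded_cellsD[OF bounded' s] by (rule coverableE)
  define A where "A = (if Vx u \<in> R' then tail else {})"
  show ?thesis
  proof (rule coverable_ppt[OF R'(1,4)])
    show "A \<subseteq> {\<pi>. 0 \<le> \<pi> \<and> \<pi> < w}" by (auto simp: A_def tail_def)
    show "{t. 0 < t \<and> t < w \<and> edge_coord t \<in> A} \<in> sets lborel" using sets_tail by (simp add: A_def)
    have "pendant_weight wv A \<le> (if Vx u \<in> R' then tail_weight else 0)"
      using pendant_weight_tail by (simp add: A_def pendant_weight_def)
    then show "region_weight V' E' wv wl R' + pendant_weight wv A \<le> c"
      using R'(3) unfolding region_weight_upd by linarith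
    show "captured V E wl F_ext s \<subseteq> R' \<union> ppt ` A"
    proof
      fix p assume p: "p \<in> captured V E wl F_ext s"
      then have "p \<in> gpoints V E wl" by (simp add: captured_def)
      then show "p \<in> R' \<union> ppt ` A"
      proof (cases rule: gpoints_cases)
        case 1 then show ?thesis using captured_subtree_subtree[OF s(1) _ p] R'(2) by blast
      next
        case (2 \<pi>)
        then have "Vx u \<in> R'" "\<pi> \<in> tail" using captured_subtree_pendant[OF s(1)] p R'(2) by blast+
        then show ?thesis using 2(3) by (simp add: A_def)
      qed
    qed
  qed
qed

lemma coverable_captured_pendant:
  assumes \<sigma>: "0 \<le> \<sigma>" "\<sigma> < w" "\<sigma> \<notin> facs"
  shows "coverable V E wv wl c (captured V E wl F_ext (ppt \<sigma>))"
proof -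
  have gap: "gap \<sigma> \<subseteq> {\<pi>. 0 \<le> \<pi> \<and> \<pi> < w}" by (auto simp: gap_def)
  have on_pendant: "p \<in> ppt ` gap \<sigma>"
    if p: "p \<in> captured V E wl F_ext (ppt \<sigma>)" and off: "p \<notin> gpoints V' E' wl" for p
  proof -
    have "p \<in> gpoints V E wl" using p by (simp add: captured_def)
    then obtain \<pi> where "0 \<le> \<pi>" "\<pi> < w" "p = ppt \<pi>" using off by (cases rule: gpoints_cases) auto
    then show ?thesis using captured_pendant_pendant[OF \<sigma>] p by auto
  qed
  show ?thesis
  proof (cases "Vx u \<notin> F' \<and> \<sigma> \<in> tail")
    case True
    then have "coverable V' E' (wv(u := wv u + tail_weight)) wl c (captured V' E' wl F' (Vx u))"
      using bounded_cellsD[OF bounded' u_gpoints_minus_leaf] by blast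
    then obtain R' where R': "R' \<subseteq> gpoints V' E' wl" "captured V' E' wl F' (Vx u) \<subseteq> R'"
        "region_weight V' E' (wv(u := wv u + tail_weight)) wl R' \<le> c" "\<forall>e\<in>E'. slice wl e R' \<in> sets lborel"
      by (rule coverableE)
    show ?thesis
    proof (rule coverable_ppt[OF R'(1,4) gap sets_gap])
      have "Vx u \<in> R'" using captured_self_minus_leaf R'(2) by blast
      then show "region_weight V' E' wv wl R' + pendant_weight wv (gap \<sigma>) \<le> c"
        using R'(3) pendant_weight_gap_tail[of \<sigma>] True unfolding region_weight_upd by simp
      show "captured V E wl F_ext (ppt \<sigma>) \<subseteq> R' \<union> ppt ` gap \<sigma>"
      proof
        fix p assume p: "p \<in> captured V E wl F_ext (ppt \<sigma>)"
        show "p \<in> R' \<union> ppt ` gap \<sigma>"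
        proof (cases "p \<in> gpoints V' E' wl")
          case True then show ?thesis using captured_pendant_subtree[OF \<sigma> True p] R'(2) by blast
        qed (use on_pendant p in blast)
      qed
    qed
  next
    case False
    show ?thesis
    proof (rule coverable_ppt[of "{}", OF _ _ gap sets_gap])
      show "region_weight V' E' wv wl {} + pendant_weight wv (gap \<sigma>) \<le> c" using pendant_weight_gap by simp
      show "captured V E wl F_ext (ppt \<sigma>) \<subseteq> {} \<union> ppt ` gap \<sigma>"
      proof
        fix p assume p: "p \<in> captured V E wl F_ext (ppt \<sigma>)"
        have "p \<notin> gpoints V' E' wl" using captured_pendant_subtree[OF \<sigma> _ p] False by blast
        then show "p \<in> {} \<union> ppt ` gap \<sigma>" using on_pendant p by blast
      qed
    qed (auto simp: slice_def)
  qed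
qed

lemma bounded_cells_extend: "bounded_cells V E wv wl c F_ext"
  unfolding bounded_cells_def
proof
  fix s assume s: "s \<in> gpoints V E wl - F_ext"
  then have "s \<in> gpoints V E wl" by simp
  then show "coverable V E wv wl c (captured V E wl F_ext s)"
  proof (cases rule: gpoints_cases)
    case 1 then show ?thesis using coverable_captured_subtree s by (auto simp: F_ext_def)
  next
    case (2 \<sigma>) then show ?thesis using coverable_captured_pendant s by (auto simp: F_ext_def)
  qed
qed

end

lemma card_F_ext_bound:
  assumes fin: "finite F'"
    and card': "card F' = 0 \<or> real (card F') * c < total_weight V' E' (wv(u := wv u + tail_weight)) wl"
  shows "card F_ext = 0 \<or> real (card F_ext) * c < total_weight V E wv wl"
proof -
  let ?W' = "total_weight V' E' (wv(u := wv u + tail_weight)) wl"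
  have split: "total_weight V E wv wl = ?W' + (wv l + w - tail_weight)" by (rule total_weight_split)
  have "real nfacs * c \<le> wv l + w - tail_weight" by (rule nfacs_weight_le)
  moreover have "0 < ?W'" using total_weight_minus_leaf_ge tail_weight_pos by linarith
  moreover have "card F_ext = card F' + nfacs" using card_F_ext[OF fin] .
  ultimately show ?thesis using card' split by (cases "nfacs = 0") (auto simp: algebra_simps)
qed

end

end

section \<open>Placement by induction on the tree\<close>

lemma bounded_cells_placement_vertex:
  assumes "c > 0"
  shows "\<exists>F. F \<subseteq> gpoints {r} {} wl \<and> finite F \<and> (card F = 0 \<or> real (card F) * c < total_weight {r} {} wv wl)
            \<and> bounded_cells {r} {} wv wl c F"
proof (cases "wv r \<le> c")
  case True
  have "coverable {r} {} wv wl c C" if "C \<subseteq> gpoints {r} {} wl" for C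
    using that True by (intro coverableI[of "{Vx r}"]) (auto simp: gpoints_def region_weight_def)
  then have "bounded_cells {r} {} wv wl c {}" unfolding bounded_cells_def captured_def by auto
  then show ?thesis by (intro exI[of _ "{}"]) simp
next
  case False
  have "bounded_cells {r} {} wv wl c {Vx r}" by (simp add: bounded_cells_def gpoints_def)
  then show ?thesis using False by (intro exI[of _ "{Vx r}"]) (simp add: gpoints_def total_weight_def)
qed

lemma bounded_cells_placement:
  assumes "conn_wgraph V E wl" "\<not> has_cycle V E" "V \<noteq> {}" "\<forall>v\<in>V. wv v \<ge> 0" "c > 0"
  shows "\<exists>F. F \<subseteq> gpoints V E wl \<and> finite F \<and> (card F = 0 \<or> real (card F) * c < total_weight V E wv wl)
            \<and> bounded_cells V E wv wl c F"
  using assms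
proof (induction "card V" arbitrary: V E wv rule: less_induct)
  case less
  interpret conn_wgraph V E wl by (rule less.prems(1))
  show ?case
  proof (cases "card V \<ge> 2")
    case False
    moreover have "card V \<noteq> 0" using less.prems(3) finV by simp
    ultimately have "card V = 1" by linarith
    then obtain r where V: "V = {r}" by (rule card_1_singletonE)
    then have "E = {}" using subE E_simple by auto
    then show ?thesis using bounded_cells_placement_vertex[OF less.prems(5)] V by simp
  next
    case True
    obtain l u e0 where "pendant V E wl l u e0" using pendant_exists[OF less.prems(2) True] by blast
    then interpret pendant_placement V E wl l u e0 c wv
      using less.prems(4,5) by (intro pendant_placement.intro pendant_placement_axioms.intro)
    let ?wv' = "wv(u := wv u + tail_weight)"
    have "card V' < card V" by (rule card_Diff1_less[OF finV lV])
    moreover have "\<forall>v\<in>V'. 0 \<le> ?wv' v" using less.prems(4) tail_weight_pos by auto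
    moreover have "V' \<noteq> {}" using uV lu by auto
    ultimately obtain F' where F': "F' \<subseteq> gpoints V' E' wl" "finite F'"
        "card F' = 0 \<or> real (card F') * c < total_weight V' E' ?wv' wl" "bounded_cells V' E' ?wv' wl c F'"
      using less.hyps conn_wgraph_minus_leaf no_cycle_minus_leaf[OF less.prems(2)] less.prems(5) by blast
    show ?thesis
      using F_ext_subset[OF F'(1)] finite_F_ext[OF F'(1,2)] card_F_ext_bound[OF F'(1-3)]
        bounded_cells_extend[OF F'(1,4)] by blast
  qed
qed

lemma conn_wgraph_if_tree: "wgraph V E wv wl \<Longrightarrow> is_tree V E \<Longrightarrow> conn_wgraph V E wl"
  by unfold_locales (auto simp: wgraph_def is_tree_def)

lemma (in conn_wgraph) total_weight_pos:
  assumes "E \<noteq> {}" "\<forall>v\<in>V. wv v \<ge> 0"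
  shows "total_weight V E wv wl > 0"
proof -
  obtain e where e: "e \<in> E" using assms(1) by blast
  have "0 < wl e" using e wl_pos by blast
  also have "\<dots> \<le> (\<Sum>e\<in>E. wl e)" using e wl_pos finite_E by (intro member_le_sum) auto
  finally have "0 < (\<Sum>e\<in>E. wl e)" .
  moreover have "0 \<le> (\<Sum>v\<in>V. wv v)" using assms(2) by (intro sum_nonneg) auto
  ultimately show ?thesis unfolding total_weight_def by linarith
qed

lemma infinite_gpoints:
  assumes "e \<in> E" "wl e > 0"
  shows "infinite (gpoints V E wl)"
proof
  assume "finite (gpoints V E wl)"
  moreover have "Ed e ` {0<..<wl e} \<subseteq> gpoints V E wl" using assms(1) unfolding gpoints_def by force
  ultimately have "finite (Ed e ` {0<..<wl e})" by (rule finite_subset[rotated])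
  then have "finite {0<..<wl e}" by (rule finite_imageD) (simp add: inj_on_def)
  then show False using assms(2) infinite_Ioo by blast
qed

lemma bounded_cells_placement_card:
  assumes G: "wgraph V E wv wl" "is_tree V E" and c: "c > 0" "total_weight V E wv wl \<le> (real m + 1) * c"
  shows "\<exists>F. F \<subseteq> gpoints V E wl \<and> finite F \<and> card F = m \<and> bounded_cells V E wv wl c F"
proof -
  have "V \<noteq> {}" "\<forall>v\<in>V. wv v \<ge> 0" "\<not> has_cycle V E" using G by (auto simp: wgraph_def is_tree_def)
  then obtain F0 where F0: "F0 \<subseteq> gpoints V E wl" "finite F0" "bounded_cells V E wv wl c F0"
      "card F0 = 0 \<or> real (card F0) * c < total_weight V E wv wl"
    using bounded_cells_placement[OF conn_wgraph_if_tree[OF G] _ _ _ c(1)] by blast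
  have "card F0 \<le> m"
  proof (cases "card F0 = 0")
    case False
    then have "real (card F0) * c < (real m + 1) * c" using F0(4) c(2) by linarith
    then have "real (card F0) < real m + 1" using c(1) by simp
    then show ?thesis by linarith
  qed simp
  obtain e where "e \<in> E" "wl e > 0" using G(1) by (auto simp: wgraph_def)
  then have "infinite (gpoints V E wl - F0)" using infinite_gpoints F0(2) by (metis Diff_infinite_finite)
  then obtain B where B: "finite B" "card B = m - card F0" "B \<subseteq> gpoints V E wl - F0"
    using infinite_arbitrarily_large by blast
  have "card (F0 \<union> B) = m" using B \<open>card F0 \<le> m\<close> F0(2) by (subst card_Un_disjoint) auto
  moreover have "F0 \<union> B \<subseteq> gpoints V E wl" "finite (F0 \<union> B)" using F0(1,2) B(1,3) by auto
  moreover have "bounded_cells V E wv wl c (F0 \<union> B)" by (rule bounded_cells_mono[OF F0(3)]) simp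
  ultimately show ?thesis by blast
qed

theorem corollary8:
  fixes V :: "'v set" and E :: "('v \<times> 'v) set"
    and wv :: "'v \<Rightarrow> real" and wl :: "'v \<times> 'v \<Rightarrow> real"
    and m k :: nat
  assumes "wgraph V E wv wl" and "is_tree V E"
    and "m \<ge> 1" and "k \<ge> 1"
  shows "\<exists>F. F \<subseteq> gpoints V E wl \<and> finite F \<and> card F = m \<and>
           (\<forall>S. S \<subseteq> gpoints V E wl \<and> finite S \<and> card S = k \<and> S \<inter> F = {} \<longrightarrow>
              Q1 V E wv wl F S \<ge> (real m - real k + 1) / (real m + 1) * total_weight V E wv wl)"
proof -
  interpret conn_wgraph V E wl using conn_wgraph_if_tree[OF assms(1,2)] .
  have wv: "\<forall>v\<in>V. wv v \<ge> 0" and "E \<noteq> {}" using assms(1) by (auto simp: wgraph_def)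
  define W where "W = total_weight V E wv wl"
  define c where "c = W / (real m + 1)"
  have c: "c > 0" "W \<le> (real m + 1) * c" using total_weight_pos[OF \<open>E \<noteq> {}\<close> wv] by (auto simp: c_def W_def)
  obtain F where F: "F \<subseteq> gpoints V E wl" "finite F" "card F = m" "bounded_cells V E wv wl c F"
    using bounded_cells_placement_card[OF assms(1,2) c[unfolded W_def]] by blast
  have "W - real k * c \<le> Q1 V E wv wl F S"
    if S: "S \<subseteq> gpoints V E wl" "finite S" "card S = k" "S \<inter> F = {}" for S
  proof -
    have "F \<noteq> {}" "S \<noteq> {}" using F(3) S(3) assms(3,4) by auto
    then show ?thesis using Q2_le[OF finV finite_E wv F(4,2) _ S(1,2) _ S(4)] S(3) by (simp add: Q1_def W_def)
  qed
  moreover have "(real m - real k + 1) / (real m + 1) * W = W - real k * c"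
    by (simp add: c_def field_simps)
  ultimately show ?thesis using F(1-3) unfolding W_def by auto
qed

end
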